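(* Assume Assumptions A.1–A.3. Suppose there exist nonnegative constants $c_1,\dots,c_p$ with $\sum_{i=1}^p c_i<1$, a constant $r>0$ and $K<\infty$ such that $$E(|\xi_1|^r\mid X_0=x)\le K+\sum_{i=1}^p c_i|x_i|^r\qquad\text{for all }x=(x_1,\dots,x_p)\in\mathbb{R}^p.$$ Then there exist positive constants $d_1,\dots,d_p$ such that $\{X_t\}$ is $V$-uniformly ergodic with $V(x)=1+\sum_{i=1}^p d_i|x_i|^r$. Furthermore, the stationary distribution of $\{X_t\}$ has finite $r$th moment.
   Context: Model: $\xi_t=a(\xi_{t-1},\dots,\xi_{t-p})+b(\xi_{t-1},\dots,\xi_{t-p})e_t$, where $a,b:\mathbb{R}^p\to\mathbb{R}$ are measurable (finitely piecewise continuous) functions, $\{e_t\}_{t\ge1}$ is an i.i.d. sequence independent of the initial state, and $X_t=(\xi_t,\dots,\xi_{t-p+1})\in\mathbb{R}^p$ is the associated Markov chain. $\|\cdot\|$ is the Euclidean norm. Assumption A.1: $e_t$ has a Lebesgue density $f$ which is locally bounded away from $0$ (bounded below by a positive constant on each compact set); $b$ is positive, locally bounded and locally bounded away from $0$. Assumption A.2: $\sup_{u\in\mathbb{R}}(1+|u|)f(u)<\infty$ and $E(|e_1|^{r_0})<\infty$ for some $r_0>0$. Assumption A.3: $a(x)/(1+\|x\|)$ and $b(x)/(1+\|x\|)$ are bounded on $\mathbb{R}^p$. For a function $V\ge1$, the chain is called $V$-uniformly ergodic if it has a stationary distribution $\Gamma$ and there exist $M<\infty$, $\beta<1$ with $\sup_{|g|\le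 V}|E(g(X_n)\mid X_0=x)-\int g\,d\Gamma|\le M\beta^nV(x)$ for all $n$ and $x$ (in particular $\sup_A|P(X_n\in A\mid X_0=x)-\Gamma(A)|\le M\beta^nV(x)$). *)

theory Defs
  imports "HOL-Probability.Probability"
begin

text \<open>State space R^p, coded as functions nat => real supported on {..<p};
  component x_i of the paper (i = 1..p) is x (i - 1).\<close>

definition stateM :: "nat \<Rightarrow> (nat \<Rightarrow> real) measure" where
  "stateM p = PiM {..<p} (\<lambda>_. borel)"

definition pnorm :: "nat \<Rightarrow> (nat \<Rightarrow> real) \<Rightarrow> real" where
  "pnorm p x = sqrt (\<Sum>i<p. (x i)\<^sup>2)"

definition shift_in :: "nat \<Rightarrow> (nat \<Rightarrow> real) \<Rightarrow> real \<Rightarrow> (nat \<Rightarrow> real)" where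
  "shift_in p x y = (\<lambda>i\<in>{..<p}. if i = 0 then y else x (i - 1))"

text \<open>One-step transition kernel of X_t: xi_1 = a(x) + b(x) e_1, e_1 with density f.\<close>
definition ar_step :: "nat \<Rightarrow> ((nat \<Rightarrow> real) \<Rightarrow> real) \<Rightarrow> ((nat \<Rightarrow> real) \<Rightarrow> real)
    \<Rightarrow> (real \<Rightarrow> real) \<Rightarrow> (nat \<Rightarrow> real) \<Rightarrow> (nat \<Rightarrow> real) measure" where
  "ar_step p a b f x = distr (density lborel f) (stateM p) (\<lambda>u. shift_in p x (a x + b x * u))"

primrec ar_nstep :: "nat \<Rightarrow> ((nat \<Rightarrow> real) \<Rightarrow> real) \<Rightarrow> ((nat \<Rightarrow> real) \<Rightarrow> real)
    \<Rightarrow> (real \<Rightarrow> real) \<Rightarrow> nat \<Rightarrow> (nat \<Rightarrow> real) \<Rightarrow> (nat \<Rightarrow> real) measure" where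
  "ar_nstep p a b f 0 x = return (stateM p) x"
| "ar_nstep p a b f (Suc n) x = bind (ar_nstep p a b f n x) (ar_step p a b f)"

definition fin_piecewise_continuous :: "nat \<Rightarrow> ((nat \<Rightarrow> real) \<Rightarrow> real) \<Rightarrow> bool" where
  "fin_piecewise_continuous p g \<longleftrightarrow>
     (\<exists>\<A>. finite \<A> \<and> \<A> \<subseteq> sets (stateM p) \<and> \<Union>\<A> = space (stateM p) \<and>
        (\<forall>A\<in>\<A>. \<forall>x\<in>A. \<forall>\<epsilon>>0. \<exists>\<delta>>0. \<forall>y\<in>A.
            pnorm p (\<lambda>i. y i - x i) < \<delta> \<longrightarrow> \<bar>g y - g x\<bar> < \<epsilon>))"

definition ar_stationary :: "nat \<Rightarrow> ((nat \<Rightarrow> real) \<Rightarrow> real) \<Rightarrow> ((nat \<Rightarrow> real) \<Rightarrow> real)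
    \<Rightarrow> (real \<Rightarrow> real) \<Rightarrow> (nat \<Rightarrow> real) measure \<Rightarrow> bool" where
  "ar_stationary p a b f \<Gamma> \<longleftrightarrow>
     prob_space \<Gamma> \<and> sets \<Gamma> = sets (stateM p) \<and> bind \<Gamma> (ar_step p a b f) = \<Gamma>"

definition V_uniformly_ergodic :: "nat \<Rightarrow> ((nat \<Rightarrow> real) \<Rightarrow> real) \<Rightarrow> ((nat \<Rightarrow> real) \<Rightarrow> real)
    \<Rightarrow> (real \<Rightarrow> real) \<Rightarrow> ((nat \<Rightarrow> real) \<Rightarrow> real) \<Rightarrow> (nat \<Rightarrow> real) measure \<Rightarrow> bool" where
  "V_uniformly_ergodic p a b f V \<Gamma> \<longleftrightarrow>
     ar_stationary p a b f \<Gamma> \<and>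
     (\<exists>M::real. \<exists>\<beta>::real. 0 \<le> \<beta> \<and> \<beta> < 1 \<and>
        (\<forall>n x g. x \<in> space (stateM p) \<longrightarrow> g \<in> borel_measurable (stateM p) \<longrightarrow>
           (\<forall>y\<in>space (stateM p). \<bar>g y\<bar> \<le> V y) \<longrightarrow>
           integrable (ar_nstep p a b f n x) g \<and> integrable \<Gamma> g \<and>
           \<bar>(\<integral>y. g y \<partial>ar_nstep p a b f n x) - (\<integral>y. g y \<partial>\<Gamma>)\<bar> \<le> M * \<beta> ^ n * V x))"

end

theory Submission
  imports Defs
begin

lemma integral_bind_of_integrable:
  fixes g :: "'b \<Rightarrow> real"
  assumes K[measurable]: "K \<in> M \<rightarrow>\<^sub>M subprob_algebra N" and g[measurable]: "g \<in> borel_measurable N"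
    and int_K: "\<And>y. y \<in> space M \<Longrightarrow> integrable (K y) g"
    and int_bind: "integrable (bind M K) g"
  shows "integrable M (\<lambda>y. \<integral>z. g z \<partial>K y)" and "(\<integral>z. g z \<partial>bind M K) = (\<integral>y. (\<integral>z. g z \<partial>K y) \<partial>M)"
proof -
  define A where "A y = (\<integral>\<^sup>+z. ennreal (g z) \<partial>K y)" for y
  define B where "B y = (\<integral>\<^sup>+z. ennreal (- g z) \<partial>K y)" for y
  have [measurable]: "A \<in> borel_measurable M" "B \<in> borel_measurable M"
    unfolding A_def B_def by measurable
  have fin: "A y \<noteq> \<infinity>" "B y \<noteq> \<infinity>" if "y \<in> space M" for y
    using int_K[OF that] unfolding real_integrable_def A_def B_def by auto
  have "(\<integral>\<^sup>+y. A y \<partial>M) = (\<integral>\<^sup>+z. ennreal (g z) \<partial>bind M K)"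
    and "(\<integral>\<^sup>+y. B y \<partial>M) = (\<integral>\<^sup>+z. ennreal (- g z) \<partial>bind M K)"
    unfolding A_def B_def by (rule nn_integral_bind[where B=N, symmetric]; simp)+
  then have int_AB: "(\<integral>\<^sup>+y. A y \<partial>M) < \<infinity>" "(\<integral>\<^sup>+y. B y \<partial>M) < \<infinity>"
    and AB_bind: "(\<integral>z. g z \<partial>bind M K) = enn2real (\<integral>\<^sup>+y. A y \<partial>M) - enn2real (\<integral>\<^sup>+y. B y \<partial>M)"
    using int_bind real_lebesgue_integral_def[OF int_bind] by (auto simp: real_integrable_def less_top)
  have enn2real_AB: "(\<integral>\<^sup>+y. ennreal (enn2real (A y)) \<partial>M) = (\<integral>\<^sup>+y. A y \<partial>M)"
    "(\<integral>\<^sup>+y. ennreal (enn2real (B y)) \<partial>M) = (\<integral>\<^sup>+y. B y \<partial>M)"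
    using fin by (auto intro!: nn_integral_cong simp: ennreal_enn2real_if infinity_ennreal_def)
  have int: "integrable M (\<lambda>y. enn2real (A y))" "integrable M (\<lambda>y. enn2real (B y))"
    using int_AB by (auto intro!: integrableI_nonneg simp: enn2real_AB infinity_ennreal_def)
  have integral_AB: "(\<integral>y. enn2real (A y) \<partial>M) = enn2real (\<integral>\<^sup>+y. A y \<partial>M)"
    "(\<integral>y. enn2real (B y) \<partial>M) = enn2real (\<integral>\<^sup>+y. B y \<partial>M)"
    by (subst integral_eq_nn_integral; simp add: enn2real_AB)+
  have G: "(\<integral>z. g z \<partial>K y) = enn2real (A y) - enn2real (B y)" if "y \<in> space M" for y
    unfolding A_def B_def by (rule real_lebesgue_integral_def[OF int_K[OF that]])
  show "integrable M (\<lambda>y. \<integral>z. g z \<partial>K y)"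
    using int by (subst Bochner_Integration.integrable_cong[OF refl G]) auto
  have "(\<integral>y. (\<integral>z. g z \<partial>K y) \<partial>M) = (\<integral>y. enn2real (A y) - enn2real (B y) \<partial>M)"
    by (intro Bochner_Integration.integral_cong) (auto simp: G)
  then show "(\<integral>z. g z \<partial>bind M K) = (\<integral>y. (\<integral>z. g z \<partial>K y) \<partial>M)"
    using int integral_AB AB_bind by simp
qed

lemma uniformly_cauchy_limit:
  fixes a e :: "nat \<Rightarrow> real"
  assumes cauchy: "\<And>n k. \<bar>a (n + k) - a n\<bar> \<le> e n" and e: "e \<longlonglongrightarrow> 0"
  shows "a \<longlonglongrightarrow> lim a" and "\<bar>lim a - a n\<bar> \<le> e n"
proof -
  have "Cauchy a"
  proof (rule metric_CauchyI)
    fix \<epsilon> :: real assume "\<epsilon> > 0"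
    then obtain N where "\<forall>n\<ge>N. norm (e n - 0) < \<epsilon> / 2"
      using LIMSEQ_D[OF e] by (meson half_gt_zero)
    then have N: "e N < \<epsilon> / 2" by auto
    have "dist (a k) (a l) < \<epsilon>" if "k \<ge> N" "l \<ge> N" for k l
      using cauchy[of N "k - N"] cauchy[of N "l - N"] that N by (simp add: dist_real_def)
    then show "\<exists>M. \<forall>k\<ge>M. \<forall>l\<ge>M. dist (a k) (a l) < \<epsilon>" by blast
  qed
  then show conv: "a \<longlonglongrightarrow> lim a" by (simp add: Cauchy_convergent_iff convergent_LIMSEQ_iff)
  have "(\<lambda>k. \<bar>a (n + k) - a n\<bar>) \<longlonglongrightarrow> \<bar>lim a - a n\<bar>"
    using LIMSEQ_ignore_initial_segment[OF conv, of n] by (intro tendsto_intros) (simp add: add.commute)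
  then show "\<bar>lim a - a n\<bar> \<le> e n"
    by (rule LIMSEQ_le_const2) (use cauchy in auto)
qed

lemma nn_integral_layer_cake:
  fixes h :: "'a \<Rightarrow> real"
  assumes "sigma_finite_measure M" and [measurable]: "h \<in> borel_measurable M"
    and h01: "\<And>y. y \<in> space M \<Longrightarrow> 0 \<le> h y \<and> h y \<le> 1"
  shows "(\<lambda>t. emeasure M {y \<in> space M. t < h y}) \<in> borel_measurable borel"
    and "(\<integral>\<^sup>+y. h y \<partial>M) = (\<integral>\<^sup>+t. emeasure M {y \<in> space M. t < h y} * indicator {0..1} t \<partial>lborel)"
proof -
  interpret M: sigma_finite_measure M by fact
  interpret pair_sigma_finite lborel M ..
  have "Measurable.pred (lborel \<Otimes>\<^sub>M M) (\<lambda>(t, y). t < h y)"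
    by measurable
  from M.measurable_emeasure_Pair[OF this[unfolded Measurable.pred_def]]
  show "(\<lambda>t. emeasure M {y \<in> space M. t < h y}) \<in> borel_measurable borel"
    by (simp add: space_pair_measure vimage_def)
  define F where "F t y = (if t < h y then 1 else 0) * (indicator {0..1} t :: ennreal)" for t y
  have [measurable]: "case_prod F \<in> borel_measurable (lborel \<Otimes>\<^sub>M M)"
    unfolding F_def by measurable
  have "(\<integral>\<^sup>+y. h y \<partial>M) = (\<integral>\<^sup>+y. (\<integral>\<^sup>+t. F t y \<partial>lborel) \<partial>M)"
  proof (rule nn_integral_cong)
    fix y assume y: "y \<in> space M"
    then have "(\<integral>\<^sup>+t. F t y \<partial>lborel) = (\<integral>\<^sup>+t. indicator {0..<h y} t \<partial>lborel)"
      using h01[OF y] by (intro nn_integral_cong) (auto simp: F_def indicator_def)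
    then show "ennreal (h y) = (\<integral>\<^sup>+t. F t y \<partial>lborel)"
      using h01[OF y] by simp
  qed
  also have "\<dots> = (\<integral>\<^sup>+t. (\<integral>\<^sup>+y. F t y \<partial>M) \<partial>lborel)"
    by (rule Fubini') measurable
  also have "\<dots> = (\<integral>\<^sup>+t. emeasure M {y \<in> space M. t < h y} * indicator {0..1} t \<partial>lborel)"
  proof (rule nn_integral_cong)
    fix t :: real
    have "(\<integral>\<^sup>+y. F t y \<partial>M) = (\<integral>\<^sup>+y. indicator {y \<in> space M. t < h y} y * indicator {0..1} t \<partial>M)"
      by (intro nn_integral_cong) (auto simp: F_def indicator_def)
    then show "(\<integral>\<^sup>+y. F t y \<partial>M) = emeasure M {y \<in> space M. t < h y} * indicator {0..1} t"
      by (simp add: nn_integral_multc)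
  qed
  finally show "(\<integral>\<^sup>+y. h y \<partial>M) = (\<integral>\<^sup>+t. emeasure M {y \<in> space M. t < h y} * indicator {0..1} t \<partial>lborel)" .
qed

lemma integral_le_of_measure_le:
  fixes h :: "'a \<Rightarrow> real"
  assumes M: "prob_space M" and N: "prob_space N" and sets_eq: "sets M = sets N"
    and le: "\<And>A. A \<in> sets M \<Longrightarrow> measure M A \<le> measure N A + e"
    and hM[measurable]: "h \<in> borel_measurable M"
    and h01: "\<And>y. y \<in> space M \<Longrightarrow> 0 \<le> h y \<and> h y \<le> 1"
  shows "(\<integral>y. h y \<partial>M) \<le> (\<integral>y. h y \<partial>N) + e"
proof -
  interpret M: prob_space M by fact
  interpret N: prob_space N by fact
  have space_eq: "space M = space N" using sets_eq by (rule sets_eq_imp_space_eq)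
  have hN[measurable]: "h \<in> borel_measurable N" using hM by (simp cong: measurable_cong_sets[OF sets_eq refl])
  have h01N: "\<And>y. y \<in> space N \<Longrightarrow> 0 \<le> h y \<and> h y \<le> 1" using h01 space_eq by simp
  have e: "0 \<le> e" using le[of "{}"] by simp
  note layer_M = nn_integral_layer_cake[OF M.sigma_finite_measure_axioms hM h01]
  note layer_N = nn_integral_layer_cake[OF N.sigma_finite_measure_axioms hN h01N]
  have superlevel_le: "emeasure M {y \<in> space M. t < h y} \<le> emeasure N {y \<in> space N. t < h y} + ennreal e" for t
  proof -
    have "{y \<in> space M. t < h y} \<in> sets M" by measurable
    then have "measure M {y \<in> space M. t < h y} \<le> measure N {y \<in> space N. t < h y} + e"
      using le space_eq by simp
    then show ?thesis
      using e by (simp add: M.emeasure_eq_measure N.emeasure_eq_measure flip: ennreal_plus)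
  qed
  have "(\<integral>\<^sup>+y. h y \<partial>M) = (\<integral>\<^sup>+t. emeasure M {y \<in> space M. t < h y} * indicator {0..1} t \<partial>lborel)"
    by (rule layer_M(2))
  also have "\<dots>
      \<le> (\<integral>\<^sup>+t. emeasure N {y \<in> space N. t < h y} * indicator {0..1} t + ennreal e * indicator {0..1} t \<partial>lborel)"
    by (intro nn_integral_mono) (auto simp: indicator_def superlevel_le)
  also have "\<dots> = (\<integral>\<^sup>+y. h y \<partial>N) + ennreal e"
    by (simp add: nn_integral_add layer_N nn_integral_cmult)
  finally have "ennreal (\<integral>y. h y \<partial>M) \<le> ennreal (\<integral>y. h y \<partial>N) + ennreal e"
    using h01 h01N
    by (simp add: nn_integral_eq_integral M.integrable_const_bound[where B=1] N.integrable_const_bound[where B=1])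
  then show ?thesis
    using e h01N by (simp add: integral_nonneg flip: ennreal_plus)
qed


locale setwise_cauchy =
  fixes S :: "'a measure" and \<mu> :: "nat \<Rightarrow> 'a measure" and e :: "nat \<Rightarrow> real"
  assumes prob_space_\<mu>: "prob_space (\<mu> n)" and sets_\<mu>: "sets (\<mu> n) = sets S"
    and e_tendsto: "e \<longlonglongrightarrow> 0"
    and cauchy: "A \<in> sets S \<Longrightarrow> \<bar>measure (\<mu> (n + k)) A - measure (\<mu> n) A\<bar> \<le> e n"
begin

definition lim_prob :: "'a set \<Rightarrow> real" where
  "lim_prob A = lim (\<lambda>n. measure (\<mu> n) A)"

lemma
  assumes "A \<in> sets S"
  shows lim_prob_tendsto: "(\<lambda>n. measure (\<mu> n) A) \<longlonglongrightarrow> lim_prob A"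
    and lim_prob_close: "\<bar>lim_prob A - measure (\<mu> n) A\<bar> \<le> e n"
  unfolding lim_prob_def using uniformly_cauchy_limit[OF cauchy[OF assms] e_tendsto] by auto

lemma lim_prob_eqI: "A \<in> sets S \<Longrightarrow> (\<lambda>n. measure (\<mu> n) A) \<longlonglongrightarrow> l \<Longrightarrow> lim_prob A = l"
  using lim_prob_tendsto LIMSEQ_unique by blast

lemma lim_prob_empty: "lim_prob {} = 0"
  by (rule lim_prob_eqI) auto

lemma lim_prob_nonneg: "A \<in> sets S \<Longrightarrow> 0 \<le> lim_prob A"
  by (rule LIMSEQ_le_const[OF lim_prob_tendsto]) auto

lemma lim_prob_space: "lim_prob (space S) = 1"
  using prob_space.prob_space[OF prob_space_\<mu>] sets_eq_imp_space_eq[OF sets_\<mu>]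
  by (intro lim_prob_eqI) auto

lemma lim_prob_additive:
  assumes "A \<in> sets S" "B \<in> sets S" "A \<inter> B = {}"
  shows "lim_prob (A \<union> B) = lim_prob A + lim_prob B"
proof (rule lim_prob_eqI)
  have "measure (\<mu> n) (A \<union> B) = measure (\<mu> n) A + measure (\<mu> n) B" for n
  proof -
    interpret prob_space "\<mu> n" by (rule prob_space_\<mu>)
    show ?thesis using assms sets_\<mu> by (intro finite_measure_Union) auto
  qed
  then show "(\<lambda>n. measure (\<mu> n) (A \<union> B)) \<longlonglongrightarrow> lim_prob A + lim_prob B"
    using tendsto_add[OF lim_prob_tendsto lim_prob_tendsto] assms by simp
qed (use assms in auto)

text \<open>Continuity at the empty set holds uniformly because the convergence is uniform in the set.\<close>

lemma lim_prob_continuous_at_empty: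
  assumes A: "range A \<subseteq> sets S" "decseq A" "(\<Inter>i. A i) = {}"
  shows "(\<lambda>i. lim_prob (A i)) \<longlonglongrightarrow> 0"
proof (rule LIMSEQ_I)
  fix r :: real assume "r > 0"
  then obtain n where "\<forall>k\<ge>n. norm (e k - 0) < r / 2"
    using LIMSEQ_D[OF e_tendsto] by (meson half_gt_zero)
  then have n: "e n < r / 2" by auto
  interpret prob_space "\<mu> n" by (rule prob_space_\<mu>)
  have "(\<lambda>i. measure (\<mu> n) (A i)) \<longlonglongrightarrow> measure (\<mu> n) (\<Inter>i. A i)"
    using A sets_\<mu> by (intro finite_Lim_measure_decseq) auto
  then have "(\<lambda>i. measure (\<mu> n) (A i)) \<longlonglongrightarrow> 0" using A(3) by simp
  then obtain N where "\<forall>i\<ge>N. norm (measure (\<mu> n) (A i) - 0) < r / 2"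
    using LIMSEQ_D \<open>r > 0\<close> by (meson half_gt_zero)
  then have N: "measure (\<mu> n) (A i) < r / 2" if "i \<ge> N" for i
    using that by simp
  have "\<bar>lim_prob (A i)\<bar> < r" if "i \<ge> N" for i
  proof -
    have Ai: "A i \<in> sets S" using A(1) by auto
    show ?thesis
      using lim_prob_close[OF Ai, of n] lim_prob_nonneg[OF Ai] N[OF that] n by (simp add: abs_le_iff)
  qed
  then show "\<exists>N. \<forall>i\<ge>N. norm (lim_prob (A i) - 0) < r" by auto
qed

definition lim_measure :: "'a measure" where
  "lim_measure = measure_of (space S) (sets S) (\<lambda>A. ennreal (lim_prob A))"

lemma countably_additive_lim_prob: "countably_additive (sets S) (\<lambda>A. ennreal (lim_prob A))"
proof (rule sets.empty_continuous_imp_countably_additive)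
  show "positive (sets S) (\<lambda>A. ennreal (lim_prob A))"
    by (simp add: positive_def lim_prob_empty)
  show "additive (sets S) (\<lambda>A. ennreal (lim_prob A))"
    by (auto simp: additive_def lim_prob_additive lim_prob_nonneg ennreal_plus)
  fix A :: "nat \<Rightarrow> _" assume "range A \<subseteq> sets S" "decseq A" "(\<Inter>i. A i) = {}"
  then show "(\<lambda>i. ennreal (lim_prob (A i))) \<longlonglongrightarrow> 0"
    using tendsto_ennrealI[OF lim_prob_continuous_at_empty] by simp
qed simp

lemma sets_lim_measure[measurable_cong]: "sets lim_measure = sets S"
  by (simp add: lim_measure_def)

lemma emeasure_lim_measure: "A \<in> sets S \<Longrightarrow> emeasure lim_measure A = ennreal (lim_prob A)"
  unfolding lim_measure_def
  by (rule emeasure_measure_of_sigma[OF sets.sigma_algebra_axioms _ countably_additive_lim_prob])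
    (auto simp: positive_def lim_prob_empty)

lemma space_lim_measure: "space lim_measure = space S"
  by (simp add: lim_measure_def)

lemma prob_space_lim_measure: "prob_space lim_measure"
  by (rule prob_spaceI) (simp add: space_lim_measure emeasure_lim_measure lim_prob_space)

lemma lim_measure_close: "A \<in> sets S \<Longrightarrow> \<bar>measure lim_measure A - measure (\<mu> n) A\<bar> \<le> e n"
  using lim_prob_close by (simp add: measure_def emeasure_lim_measure lim_prob_nonneg)

end


primrec kernel_pow :: "'a measure \<Rightarrow> ('a \<Rightarrow> 'a measure) \<Rightarrow> nat \<Rightarrow> 'a \<Rightarrow> 'a measure" where
  "kernel_pow S P 0 x = return S x"
| "kernel_pow S P (Suc n) x = bind (kernel_pow S P n x) P"

locale markov_kernel =
  fixes S :: "'a measure" and P :: "'a \<Rightarrow> 'a measure"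
  assumes kernel_prob_algebra: "P \<in> S \<rightarrow>\<^sub>M prob_algebra S"
begin

abbreviation Pn :: "nat \<Rightarrow> 'a \<Rightarrow> 'a measure" where
  "Pn \<equiv> kernel_pow S P"

lemma kernel_subprob_algebra[measurable]: "P \<in> S \<rightarrow>\<^sub>M subprob_algebra S"
  using kernel_prob_algebra measurable_prob_algebraD by blast

lemma kernel_pow_prob_algebra: "Pn n \<in> S \<rightarrow>\<^sub>M prob_algebra S"
  by (induction n) (simp_all add: measurable_return_prob_space measurable_bind_prob_space kernel_prob_algebra)

lemma kernel_pow_subprob_algebra[measurable]: "Pn n \<in> S \<rightarrow>\<^sub>M subprob_algebra S"
  using kernel_pow_prob_algebra measurable_prob_algebraD by blast

lemma
  assumes "x \<in> space S"
  shows prob_space_kernel: "prob_space (P x)"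
    and sets_kernel: "sets (P x) = sets S"
    and space_kernel: "space (P x) = space S"
  using measurable_space[OF kernel_prob_algebra assms] sets_eq_imp_space_eq
  by (auto simp: space_prob_algebra)

lemma
  assumes "x \<in> space S"
  shows prob_space_kernel_pow: "prob_space (Pn n x)"
    and sets_kernel_pow: "sets (Pn n x) = sets S"
  using measurable_space[OF kernel_pow_prob_algebra assms] by (auto simp: space_prob_algebra)

lemma space_kernel_pow: "x \<in> space S \<Longrightarrow> space (Pn n x) = space S"
  using sets_kernel_pow by (rule sets_eq_imp_space_eq)

lemma measurable_kernel_pow_cong:
  "x \<in> space S \<Longrightarrow> g \<in> S \<rightarrow>\<^sub>M N \<Longrightarrow> g \<in> Pn n x \<rightarrow>\<^sub>M N"
  using measurable_cong_sets[OF sets_kernel_pow refl] by blast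

lemma kernel_pow_add: "x \<in> space S \<Longrightarrow> Pn (m + k) x = bind (Pn m x) (Pn k)"
proof (induction k)
  case 0
  then show ?case by (simp add: bind_return'' sets_kernel_pow)
next
  case (Suc k)
  have "Pn (m + Suc k) x = bind (bind (Pn m x) (Pn k)) P"
    using Suc by simp
  also have "\<dots> = bind (Pn m x) (\<lambda>y. bind (Pn k y) P)"
    by (rule bind_assoc[OF measurable_kernel_pow_cong[OF Suc.prems] kernel_subprob_algebra]) measurable
  finally show ?case by simp
qed

lemma nn_integral_kernel_pow_Suc:
  assumes "g \<in> borel_measurable S" and "x \<in> space S"
  shows "(\<integral>\<^sup>+y. g y \<partial>Pn (Suc n) x) = (\<integral>\<^sup>+y. (\<integral>\<^sup>+z. g z \<partial>P y) \<partial>Pn n x)"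
  using assms by (simp add: nn_integral_bind[OF _ measurable_kernel_pow_cong[OF _ kernel_subprob_algebra]])

lemma nn_integral_kernel_pow_add:
  assumes "g \<in> borel_measurable S" and "x \<in> space S"
  shows "(\<integral>\<^sup>+y. g y \<partial>Pn (m + k) x) = (\<integral>\<^sup>+y. (\<integral>\<^sup>+z. g z \<partial>Pn k y) \<partial>Pn m x)"
  using assms by (simp add: kernel_pow_add nn_integral_bind[OF _ measurable_kernel_pow_cong[OF _ kernel_pow_subprob_algebra]])

lemma measurable_integral_kernel_pow[measurable]:
  fixes g :: "'a \<Rightarrow> real"
  assumes [measurable]: "g \<in> borel_measurable S"
  shows "(\<lambda>y. \<integral>z. g z \<partial>Pn n y) \<in> borel_measurable S"
  by measurable

lemma bind_kernel_pow_invariant: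
  assumes "sets \<Gamma> = sets S" and "bind \<Gamma> P = \<Gamma>"
  shows "bind \<Gamma> (Pn n) = \<Gamma>"
proof (induction n)
  case 0
  then show ?case using assms(1) by (simp add: bind_return'')
next
  case (Suc n)
  have "Pn (Suc n) = (\<lambda>y. bind (Pn n y) P)"
    by (simp add: fun_eq_iff)
  then have "bind \<Gamma> (Pn (Suc n)) = bind \<Gamma> (\<lambda>y. bind (Pn n y) P)"
    by simp
  also have "\<dots> = bind (bind \<Gamma> (Pn n)) P"
    by (intro bind_assoc[symmetric, where N=S and R=S] kernel_subprob_algebra)
      (simp add: measurable_cong_sets[OF assms(1) refl] kernel_pow_subprob_algebra)
  also have "\<dots> = \<Gamma>"
    using Suc assms(2) by simp
  finally show ?case .
qed

end

lemma oscillation_bound_center: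
  fixes \<phi> w :: "'a \<Rightarrow> real"
  assumes "A \<noteq> {}" and osc: "\<And>x y. x \<in> A \<Longrightarrow> y \<in> A \<Longrightarrow> \<bar>\<phi> x - \<phi> y\<bar> \<le> w x + w y"
  shows "\<exists>c. \<forall>z\<in>A. \<bar>\<phi> z - c\<bar> \<le> w z"
proof -
  obtain x0 where x0: "x0 \<in> A" using assms(1) by blast
  define c where "c = (SUP z\<in>A. \<phi> z - w z)"
  have "\<phi> z - w z \<le> \<phi> x0 + w x0" if "z \<in> A" for z
    using osc[OF that x0] by (simp add: abs_le_iff)
  then have bdd: "bdd_above ((\<lambda>z. \<phi> z - w z) ` A)"
    by (intro bdd_aboveI2)
  have upper: "\<phi> z - w z \<le> c" if "z \<in> A" for z
    unfolding c_def using cSUP_upper[OF that bdd] .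
  have lower: "c \<le> \<phi> z + w z" if z: "z \<in> A" for z
  proof -
    have "\<phi> y - w y \<le> \<phi> z + w z" if "y \<in> A" for y
      using osc[OF that z] by (simp add: abs_le_iff)
    then show ?thesis
      unfolding c_def using assms(1) by (intro cSUP_least)
  qed
  have "\<bar>\<phi> z - c\<bar> \<le> w z" if "z \<in> A" for z
    using upper[OF that] lower[OF that] by (simp add: abs_le_iff)
  then show ?thesis by blast
qed

locale lyapunov_kernel = markov_kernel +
  fixes V :: "'a \<Rightarrow> real" and \<gamma> L :: real
  assumes V_measurable[measurable]: "V \<in> borel_measurable S"
    and V_ge_1: "x \<in> space S \<Longrightarrow> 1 \<le> V x"
    and \<gamma>_nonneg: "0 \<le> \<gamma>" and \<gamma>_less_1: "\<gamma> < 1" and L_nonneg: "0 \<le> L"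
    and drift: "x \<in> space S \<Longrightarrow> (\<integral>\<^sup>+y. V y \<partial>P x) \<le> ennreal (\<gamma> * V x + L)"
begin

definition L_lim :: real where
  "L_lim = L / (1 - \<gamma>)"

lemma L_lim_nonneg: "0 \<le> L_lim"
  using L_nonneg \<gamma>_less_1 by (simp add: L_lim_def)

lemma V_nonneg: "x \<in> space S \<Longrightarrow> 0 \<le> V x"
  using V_ge_1 order_trans zero_le_one by blast

lemma nn_integral_V_kernel_pow:
  assumes x: "x \<in> space S"
  shows "(\<integral>\<^sup>+y. V y \<partial>Pn n x) \<le> ennreal (\<gamma> ^ n * V x + L_lim)"
proof (induction n)
  case 0
  show ?case using x L_lim_nonneg by (simp add: nn_integral_return ennreal_leI)
next
  case (Suc n)
  interpret prob_space "Pn n x" using prob_space_kernel_pow[OF x] .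
  have "(\<integral>\<^sup>+y. V y \<partial>Pn (Suc n) x) = (\<integral>\<^sup>+y. (\<integral>\<^sup>+z. V z \<partial>P y) \<partial>Pn n x)"
    by (rule nn_integral_kernel_pow_Suc[OF _ x]) measurable
  also have "\<dots> \<le> (\<integral>\<^sup>+y. ennreal \<gamma> * V y + ennreal L \<partial>Pn n x)"
    using drift V_nonneg \<gamma>_nonneg L_nonneg
    by (intro nn_integral_mono) (simp add: space_kernel_pow[OF x] ennreal_plus ennreal_mult)
  also have "\<dots> = ennreal \<gamma> * (\<integral>\<^sup>+y. V y \<partial>Pn n x) + ennreal L"
  proof -
    have [measurable]: "(\<lambda>y. ennreal (V y)) \<in> borel_measurable (Pn n x)"
      by (rule measurable_kernel_pow_cong[OF x]) measurable
    show ?thesis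
      by (simp add: nn_integral_add nn_integral_cmult emeasure_space_1)
  qed
  also have "\<dots> \<le> ennreal \<gamma> * ennreal (\<gamma> ^ n * V x + L_lim) + ennreal L"
    by (intro add_right_mono mult_left_mono Suc.IH) auto
  also have "\<dots> = ennreal (\<gamma> ^ Suc n * V x + L_lim)"
  proof -
    have "\<gamma> * L_lim + L = L_lim"
      using \<gamma>_less_1 by (simp add: L_lim_def field_simps)
    then show ?thesis
      using \<gamma>_nonneg L_nonneg L_lim_nonneg V_nonneg[OF x]
      by (simp add: ennreal_mult[symmetric] ennreal_plus[symmetric] algebra_simps del: ennreal_plus)
  qed
  finally show ?case .
qed

lemma nn_integral_V_kernel_pow_le:
  assumes x: "x \<in> space S"
  shows "(\<integral>\<^sup>+y. V y \<partial>Pn n x) \<le> ennreal (V x + L_lim)"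
proof -
  have "\<gamma> ^ n * V x \<le> V x"
    using \<gamma>_nonneg \<gamma>_less_1 V_nonneg[OF x] by (simp add: mult_left_le_one_le power_le_one)
  then show ?thesis
    using nn_integral_V_kernel_pow[OF x, of n] by (simp add: order_trans ennreal_leI)
qed

lemma integrable_kernel_pow:
  fixes g :: "'a \<Rightarrow> real"
  assumes x: "x \<in> space S" and [measurable]: "g \<in> borel_measurable S"
    and g_le: "\<And>y. y \<in> space S \<Longrightarrow> \<bar>g y\<bar> \<le> C * V y"
  shows "integrable (Pn n x) g"
proof -
  have "0 \<le> C * V x"
    using g_le[OF x] by (meson abs_ge_zero order_trans)
  then have C: "0 \<le> C"
    using V_ge_1[OF x] by (simp add: zero_le_mult_iff)
  have "ennreal (norm (g y)) \<le> ennreal C * ennreal (V y)" if "y \<in> space S" for y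
    using g_le[OF that] C V_nonneg[OF that] by (simp add: ennreal_mult[symmetric] ennreal_leI)
  then have "(\<integral>\<^sup>+y. norm (g y) \<partial>Pn n x) \<le> (\<integral>\<^sup>+y. ennreal C * V y \<partial>Pn n x)"
    by (intro nn_integral_mono) (simp add: space_kernel_pow[OF x])
  also have "\<dots> = ennreal C * (\<integral>\<^sup>+y. V y \<partial>Pn n x)"
    by (rule nn_integral_cmult) (rule measurable_kernel_pow_cong[OF x], measurable)
  also have "\<dots> \<le> ennreal C * ennreal (V x + L_lim)"
    by (intro mult_left_mono nn_integral_V_kernel_pow_le[OF x]) simp
  also have "\<dots> < \<infinity>"
    by (simp add: ennreal_mult_less_top)
  moreover have "g \<in> borel_measurable (Pn n x)"
    by (rule measurable_kernel_pow_cong[OF x]) measurable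
  ultimately show ?thesis
    by (simp add: integrable_iff_bounded)
qed

lemma integrable_V_kernel_pow: "x \<in> space S \<Longrightarrow> integrable (Pn n x) V"
  by (rule integrable_kernel_pow[where C=1]) (auto simp: V_nonneg)

lemma integrable_kernel_pow_affine:
  fixes g :: "'a \<Rightarrow> real"
  assumes x: "x \<in> space S" and [measurable]: "g \<in> borel_measurable S" and a: "0 \<le> a"
    and g_le: "\<And>y. y \<in> space S \<Longrightarrow> \<bar>g y\<bar> \<le> a + b * V y"
  shows "integrable (Pn n x) g"
proof (rule integrable_kernel_pow[OF x, where C="a + \<bar>b\<bar>"])
  fix y assume y: "y \<in> space S"
  have "a + b * V y \<le> a * V y + \<bar>b\<bar> * V y"
    using V_ge_1[OF y] a by (smt (verit) abs_ge_self mult_le_cancel_left1 mult_right_mono)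
  then show "\<bar>g y\<bar> \<le> (a + \<bar>b\<bar>) * V y"
    using g_le[OF y] by (simp add: algebra_simps)
qed measurable

lemma integral_V_kernel_pow:
  assumes x: "x \<in> space S"
  shows "(\<integral>y. V y \<partial>Pn n x) \<le> \<gamma> ^ n * V x + L_lim"
proof -
  have "ennreal (\<integral>y. V y \<partial>Pn n x) = (\<integral>\<^sup>+y. V y \<partial>Pn n x)"
    using integrable_V_kernel_pow[OF x] V_nonneg
    by (intro nn_integral_eq_integral[symmetric]) (auto simp: space_kernel_pow[OF x])
  also have "\<dots> \<le> ennreal (\<gamma> ^ n * V x + L_lim)"
    by (rule nn_integral_V_kernel_pow[OF x])
  finally show ?thesis
    using V_nonneg[OF x] L_lim_nonneg \<gamma>_nonneg by (subst (asm) ennreal_le_iff) auto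
qed

lemma integral_V_kernel_pow_le:
  assumes x: "x \<in> space S"
  shows "(\<integral>y. V y \<partial>Pn n x) \<le> V x + L_lim"
proof -
  have "\<gamma> ^ n * V x \<le> V x"
    using \<gamma>_nonneg \<gamma>_less_1 V_nonneg[OF x] by (simp add: mult_left_le_one_le power_le_one)
  then show ?thesis
    using integral_V_kernel_pow[OF x, of n] by linarith
qed

lemma integral_kernel_pow_add:
  fixes g :: "'a \<Rightarrow> real"
  assumes x: "x \<in> space S" and g[measurable]: "g \<in> borel_measurable S"
    and g_le: "\<And>y. y \<in> space S \<Longrightarrow> \<bar>g y\<bar> \<le> C * V y"
  shows "integrable (Pn m x) (\<lambda>y. \<integral>z. g z \<partial>Pn k y)"
    and "(\<integral>z. g z \<partial>Pn (m + k) x) = (\<integral>y. (\<integral>z. g z \<partial>Pn k y) \<partial>Pn m x)"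
proof -
  have "integrable (Pn k y) g" if "y \<in> space (Pn m x)" for y
    using integrable_kernel_pow[OF _ g g_le] that by (simp add: space_kernel_pow[OF x])
  moreover have "integrable (bind (Pn m x) (Pn k)) g"
    using integrable_kernel_pow[OF x g g_le, of "m + k"] by (simp add: kernel_pow_add[OF x])
  ultimately show "integrable (Pn m x) (\<lambda>y. \<integral>z. g z \<partial>Pn k y)"
    and "(\<integral>z. g z \<partial>Pn (m + k) x) = (\<integral>y. (\<integral>z. g z \<partial>Pn k y) \<partial>Pn m x)"
    using integral_bind_of_integrable[OF measurable_kernel_pow_cong[OF x kernel_pow_subprob_algebra] g]
    by (simp_all add: kernel_pow_add[OF x])
qed

end


locale harris_kernel = lyapunov_kernel +
  fixes m :: nat and R \<alpha> :: real and \<nu> :: "'a measure"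
  assumes m_pos: "0 < m"
    and R_large: "2 * L_lim < (1 - \<gamma> ^ m) * R"
    and \<alpha>_pos: "0 < \<alpha>"
    and prob_space_\<nu>: "prob_space \<nu>" and sets_\<nu>: "sets \<nu> = sets S"
    and minorization: "\<And>x g. x \<in> space S \<Longrightarrow> V x \<le> R \<Longrightarrow> g \<in> borel_measurable S \<Longrightarrow>
      ennreal \<alpha> * (\<integral>\<^sup>+y. g y \<partial>\<nu>) \<le> (\<integral>\<^sup>+y. g y \<partial>Pn m x)"
begin

definition \<gamma>0 :: real where
  "\<gamma>0 = \<gamma> ^ m + 2 * L_lim / R"

definition \<beta> :: real where
  "\<beta> = \<alpha> / (2 * L_lim + 1)"

definition \<rho> :: real where
  "\<rho> = max ((2 + \<beta> * \<gamma>0 * R) / (2 + \<beta> * R)) (max (1 - \<alpha> / 2) \<gamma>0)"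

lemma R_pos: "0 < R"
  using R_large L_lim_nonneg \<gamma>_nonneg \<gamma>_less_1 by (smt (verit) power_le_one zero_less_mult_iff)

lemma \<gamma>0_bounds: "\<gamma> ^ m \<le> \<gamma>0" "\<gamma>0 < 1" "2 * L_lim \<le> (\<gamma>0 - \<gamma> ^ m) * R"
  using R_large R_pos L_lim_nonneg by (auto simp: \<gamma>0_def field_simps)

lemma \<beta>_pos: "0 < \<beta>"
  using \<alpha>_pos L_lim_nonneg by (simp add: \<beta>_def)

lemma \<beta>_K: "2 * \<beta> * L_lim \<le> \<alpha>"
proof -
  have "2 * \<beta> * L_lim = \<alpha> * (2 * L_lim / (2 * L_lim + 1))"
    using L_lim_nonneg by (simp add: \<beta>_def field_simps)
  also have "\<dots> \<le> \<alpha>"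
    using L_lim_nonneg \<alpha>_pos by (intro mult_left_le) auto
  finally show ?thesis .
qed

lemma \<rho>_bounds: "0 \<le> \<rho>" "\<rho> < 1"
proof -
  have "0 \<le> \<gamma>0" using \<gamma>0_bounds(1) \<gamma>_nonneg by (meson order_trans zero_le_power)
  then show "0 \<le> \<rho>" by (simp add: \<rho>_def)
  have "\<beta> * \<gamma>0 * R < \<beta> * R"
    using \<beta>_pos R_pos \<gamma>0_bounds(2) by simp
  then have "(2 + \<beta> * \<gamma>0 * R) / (2 + \<beta> * R) < 1"
    using \<beta>_pos R_pos by (simp add: add_pos_pos)
  then show "\<rho> < 1"
    using \<gamma>0_bounds(2) \<alpha>_pos by (simp add: \<rho>_def)
qed

lemma kernel_pow_weight_integral:
  assumes v: "v \<in> space S" and B: "0 \<le> B"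
  shows "integrable (Pn m v) (\<lambda>z. B * (1 + \<beta> * V z))"
    and "(\<integral>z. B * (1 + \<beta> * V z) \<partial>Pn m v) \<le> B * (1 + \<beta> * (\<gamma> ^ m * V v + L_lim))"
proof -
  interpret prob_space "Pn m v" by (rule prob_space_kernel_pow[OF v])
  show "integrable (Pn m v) (\<lambda>z. B * (1 + \<beta> * V z))"
    using integrable_V_kernel_pow[OF v] by simp
  have "(\<integral>z. B * (1 + \<beta> * V z) \<partial>Pn m v) = B * (1 + \<beta> * (\<integral>z. V z \<partial>Pn m v))"
    using integrable_V_kernel_pow[OF v] by (simp add: prob_space)
  also have "\<dots> \<le> B * (1 + \<beta> * (\<gamma> ^ m * V v + L_lim))"
    using integral_V_kernel_pow[OF v] \<beta>_pos B by (intro mult_left_mono add_left_mono) auto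
  finally show "(\<integral>z. B * (1 + \<beta> * V z) \<partial>Pn m v) \<le> B * (1 + \<beta> * (\<gamma> ^ m * V v + L_lim))" .
qed

text \<open>The coupling step: from both starting points the kernel puts mass \<open>\<alpha>\<close> on the common
  measure \<open>\<nu>\<close>, on which \<open>w - u\<close> and \<open>w + u\<close> add up to at least \<open>2 B\<close>.\<close>

lemma minorization_coupling:
  assumes [measurable]: "u \<in> borel_measurable S" and B: "0 \<le> B"
    and u_le: "\<And>z. z \<in> space S \<Longrightarrow> \<bar>u z\<bar> \<le> B * (1 + \<beta> * V z)"
    and x: "x \<in> space S" and y: "y \<in> space S" and small: "V x + V y \<le> R"
  shows "(\<integral>z. u z \<partial>Pn m x) - (\<integral>z. u z \<partial>Pn m y)
    \<le> (\<integral>z. B * (1 + \<beta> * V z) \<partial>Pn m x) + (\<integral>z. B * (1 + \<beta> * V z) \<partial>Pn m y) - 2 * \<alpha> * B"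
proof -
  define w where "w z = B * (1 + \<beta> * V z)" for z
  have [measurable]: "w \<in> borel_measurable S" unfolding w_def by measurable
  have uw: "0 \<le> w z - u z" "0 \<le> w z + u z" if "z \<in> space S" for z
    using u_le[OF that] by (auto simp: w_def abs_le_iff)
  have w_ge: "B \<le> w z" if "z \<in> space S" for z
    using V_nonneg[OF that] \<beta>_pos B by (simp add: w_def algebra_simps)
  have int_u: "integrable (Pn m v) u" if "v \<in> space S" for v
    using u_le B by (intro integrable_kernel_pow_affine[OF that, where a=B and b="B * \<beta>"])
      (auto simp: algebra_simps)
  have int_w: "integrable (Pn m v) w" if "v \<in> space S" for v
    unfolding w_def using kernel_pow_weight_integral(1)[OF that B] .
  have "ennreal (2 * \<alpha> * B) = ennreal \<alpha> * (\<integral>\<^sup>+z. ennreal (2 * B) \<partial>\<nu>)"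
    using prob_space.emeasure_space_1[OF prob_space_\<nu>] \<alpha>_pos B by (simp add: ennreal_mult mult_ac)
  also have "\<dots> \<le> ennreal \<alpha> * (\<integral>\<^sup>+z. ennreal (w z - u z) + ennreal (w z + u z) \<partial>\<nu>)"
    using sets_eq_imp_space_eq[OF sets_\<nu>] uw w_ge
    by (intro mult_left_mono nn_integral_mono) (auto simp: ennreal_plus[symmetric] ennreal_leI simp del: ennreal_plus)
  also have "\<dots> = ennreal \<alpha> * (\<integral>\<^sup>+z. w z - u z \<partial>\<nu>) + ennreal \<alpha> * (\<integral>\<^sup>+z. w z + u z \<partial>\<nu>)"
  proof -
    have [measurable]: "w \<in> borel_measurable \<nu>" "u \<in> borel_measurable \<nu>"
      by (simp_all add: measurable_cong_sets[OF sets_\<nu> refl])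
    show ?thesis
      by (simp add: nn_integral_add distrib_left)
  qed
  also have "\<dots> \<le> (\<integral>\<^sup>+z. w z - u z \<partial>Pn m x) + (\<integral>\<^sup>+z. w z + u z \<partial>Pn m y)"
    using V_ge_1 small V_nonneg x y
    by (intro add_mono minorization) (auto intro: order_trans[of _ "V x + V y"])
  also have "\<dots> = ennreal (\<integral>z. w z - u z \<partial>Pn m x) + ennreal (\<integral>z. w z + u z \<partial>Pn m y)"
  proof -
    have "(\<integral>\<^sup>+z. w z - u z \<partial>Pn m x) = ennreal (\<integral>z. w z - u z \<partial>Pn m x)"
      by (rule nn_integral_eq_integral) (use int_u[OF x] int_w[OF x] uw in \<open>auto intro!: AE_I2 simp: space_kernel_pow[OF x]\<close>)
    moreover have "(\<integral>\<^sup>+z. w z + u z \<partial>Pn m y) = ennreal (\<integral>z. w z + u z \<partial>Pn m y)"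
      by (rule nn_integral_eq_integral) (use int_u[OF y] int_w[OF y] uw in \<open>auto intro!: AE_I2 simp: space_kernel_pow[OF y]\<close>)
    ultimately show ?thesis by simp
  qed
  finally have "ennreal (2 * \<alpha> * B) \<le> ennreal (\<integral>z. w z - u z \<partial>Pn m x) + ennreal (\<integral>z. w z + u z \<partial>Pn m y)" .
  moreover have "0 \<le> (\<integral>z. w z - u z \<partial>Pn m x)" "0 \<le> (\<integral>z. w z + u z \<partial>Pn m y)"
    using uw x y by (auto intro!: integral_nonneg_AE AE_I2 simp: space_kernel_pow)
  ultimately have "2 * \<alpha> * B \<le> (\<integral>z. w z - u z \<partial>Pn m x) + (\<integral>z. w z + u z \<partial>Pn m y)"
    by (simp add: ennreal_plus[symmetric] del: ennreal_plus)
  moreover have "(\<integral>z. w z - u z \<partial>Pn m x) = (\<integral>z. w z \<partial>Pn m x) - (\<integral>z. u z \<partial>Pn m x)"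
    using int_u[OF x] int_w[OF x] by simp
  moreover have "(\<integral>z. w z + u z \<partial>Pn m y) = (\<integral>z. w z \<partial>Pn m y) + (\<integral>z. u z \<partial>Pn m y)"
    using int_u[OF y] int_w[OF y] by simp
  ultimately show ?thesis
    unfolding w_def[symmetric] by linarith
qed

end

context harris_kernel
begin

lemma contraction_centered:
  assumes [measurable]: "u \<in> borel_measurable S" and B: "0 \<le> B"
    and u_le: "\<And>z. z \<in> space S \<Longrightarrow> \<bar>u z\<bar> \<le> B * (1 + \<beta> * V z)"
    and x: "x \<in> space S" and y: "y \<in> space S"
  shows "\<bar>(\<integral>z. u z \<partial>Pn m x) - (\<integral>z. u z \<partial>Pn m y)\<bar> \<le> \<rho> * B * (2 + \<beta> * V x + \<beta> * V y)"
proof -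
  define W where "W v = (\<integral>z. B * (1 + \<beta> * V z) \<partial>Pn m v)" for v
  define s where "s = V x + V y"
  have s: "0 \<le> s" using V_nonneg x y by (simp add: s_def)
  have W_sum: "W x + W y \<le> B * (2 + \<beta> * \<gamma> ^ m * s + 2 * \<beta> * L_lim)"
    using kernel_pow_weight_integral(2)[OF x B] kernel_pow_weight_integral(2)[OF y B]
    by (simp add: W_def s_def algebra_simps)
  have abs_u: "\<bar>\<integral>z. u z \<partial>Pn m v\<bar> \<le> W v" if v: "v \<in> space S" for v
  proof -
    have "\<bar>\<integral>z. u z \<partial>Pn m v\<bar> \<le> (\<integral>z. \<bar>u z\<bar> \<partial>Pn m v)"
      by (rule integral_abs_bound)
    also have "\<dots> \<le> W v"
      unfolding W_def using u_le kernel_pow_weight_integral(1)[OF v B] B V_nonneg \<beta>_pos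
      by (intro integral_mono integrable_abs integrable_kernel_pow_affine[OF v, where a=B and b="B * \<beta>"])
        (auto simp: space_kernel_pow[OF v] algebra_simps)
    finally show ?thesis .
  qed
  show ?thesis
  proof (cases "s \<le> R")
    case True
    then have "\<bar>(\<integral>z. u z \<partial>Pn m x) - (\<integral>z. u z \<partial>Pn m y)\<bar> \<le> W x + W y - 2 * \<alpha> * B"
      using minorization_coupling[OF _ B u_le x y] minorization_coupling[OF _ B u_le y x]
      by (simp add: W_def s_def abs_le_iff add.commute)
    also have "\<dots> \<le> B * (2 - \<alpha> + \<beta> * \<gamma> ^ m * s)"
    proof -
      have "B * (2 * \<beta> * L_lim) \<le> B * \<alpha>"
        using \<beta>_K B by (rule mult_left_mono)
      then show ?thesis
        using W_sum by (simp add: algebra_simps)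
    qed
    also have "\<dots> \<le> B * (\<rho> * (2 + \<beta> * s))"
    proof (intro mult_left_mono[OF _ B])
      have "\<beta> * \<gamma> ^ m * s \<le> \<beta> * \<rho> * s"
        using \<gamma>0_bounds(1) \<beta>_pos s by (intro mult_right_mono mult_left_mono) (auto simp: \<rho>_def)
      moreover have "1 - \<alpha> / 2 \<le> \<rho>" by (simp add: \<rho>_def)
      ultimately show "2 - \<alpha> + \<beta> * \<gamma> ^ m * s \<le> \<rho> * (2 + \<beta> * s)"
        by (simp add: algebra_simps)
    qed
    finally show ?thesis by (simp add: s_def algebra_simps)
  next
    case False
    have "\<bar>(\<integral>z. u z \<partial>Pn m x) - (\<integral>z. u z \<partial>Pn m y)\<bar> \<le> W x + W y"
      using abs_u[OF x] abs_u[OF y] by simp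
    also have "\<dots> \<le> B * (2 + \<beta> * \<gamma>0 * s)"
    proof -
      have "(\<gamma>0 - \<gamma> ^ m) * R \<le> (\<gamma>0 - \<gamma> ^ m) * s"
        using \<gamma>0_bounds(1) False by (intro mult_left_mono) auto
      then have "2 * L_lim \<le> (\<gamma>0 - \<gamma> ^ m) * s"
        using \<gamma>0_bounds(3) by linarith
      then have "\<beta> * (2 * L_lim) \<le> \<beta> * ((\<gamma>0 - \<gamma> ^ m) * s)"
        using \<beta>_pos by (intro mult_left_mono) auto
      then have "2 + \<beta> * \<gamma> ^ m * s + 2 * \<beta> * L_lim \<le> 2 + \<beta> * \<gamma>0 * s"
        by (simp add: algebra_simps)
      then show ?thesis
        using W_sum mult_left_mono[OF _ B] by (meson order_trans)
    qed
    also have "\<dots> \<le> B * (\<rho> * (2 + \<beta> * s))"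
    proof (intro mult_left_mono[OF _ B])
      have pos: "0 < 2 + \<beta> * R" "0 < 2 + \<beta> * s"
        using \<beta>_pos R_pos s by (auto intro: add_pos_nonneg)
      have "(2 + \<beta> * \<gamma>0 * s) * (2 + \<beta> * R) \<le> (2 + \<beta> * \<gamma>0 * R) * (2 + \<beta> * s)"
      proof -
        have "0 \<le> 2 * \<beta> * (1 - \<gamma>0) * (s - R)"
          using False \<beta>_pos \<gamma>0_bounds(2) by simp
        then show ?thesis by (simp add: algebra_simps)
      qed
      then have "2 + \<beta> * \<gamma>0 * s \<le> (2 + \<beta> * \<gamma>0 * R) / (2 + \<beta> * R) * (2 + \<beta> * s)"
        using pos by (simp add: field_simps)
      also have "\<dots> \<le> \<rho> * (2 + \<beta> * s)"
        using pos by (intro mult_right_mono) (auto simp: \<rho>_def)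
      finally show "2 + \<beta> * \<gamma>0 * s \<le> \<rho> * (2 + \<beta> * s)" .
    qed
    finally show ?thesis by (simp add: s_def algebra_simps)
  qed
qed

lemma contraction:
  assumes [measurable]: "\<phi> \<in> borel_measurable S"
    and osc: "\<And>x y. x \<in> space S \<Longrightarrow> y \<in> space S \<Longrightarrow> \<bar>\<phi> x - \<phi> y\<bar> \<le> B * (2 + \<beta> * V x + \<beta> * V y)"
    and x: "x \<in> space S" and y: "y \<in> space S"
  shows "\<bar>(\<integral>z. \<phi> z \<partial>Pn m x) - (\<integral>z. \<phi> z \<partial>Pn m y)\<bar> \<le> \<rho> * B * (2 + \<beta> * V x + \<beta> * V y)"
proof -
  have "0 \<le> B * (2 + \<beta> * V x + \<beta> * V x)"
    using osc[OF x x] by simp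
  moreover have "0 < 2 + \<beta> * V x + \<beta> * V x"
    using \<beta>_pos V_nonneg[OF x] by (smt (verit) mult_nonneg_nonneg)
  ultimately have B: "0 \<le> B"
    by (simp add: zero_le_mult_iff)
  obtain c where c: "\<And>z. z \<in> space S \<Longrightarrow> \<bar>\<phi> z - c\<bar> \<le> B * (1 + \<beta> * V z)"
    using oscillation_bound_center[of "space S" \<phi> "\<lambda>z. B * (1 + \<beta> * V z)"] osc x
    by (fastforce simp: algebra_simps)
  have integral_shift: "(\<integral>z. \<phi> z - c \<partial>Pn m v) = (\<integral>z. \<phi> z \<partial>Pn m v) - c" if v: "v \<in> space S" for v
  proof -
    interpret prob_space "Pn m v" by (rule prob_space_kernel_pow[OF v])
    have "integrable (Pn m v) (\<lambda>z. \<phi> z - c)"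
      using c B by (intro integrable_kernel_pow_affine[OF v, where a=B and b="B * \<beta>"]) (auto simp: algebra_simps)
    then have "integrable (Pn m v) \<phi>"
      using Bochner_Integration.integrable_add[of _ _ "\<lambda>_. c"] by fastforce
    then show ?thesis by (simp add: prob_space)
  qed
  show ?thesis
    using contraction_centered[of "\<lambda>z. \<phi> z - c", OF _ B c x y] integral_shift[OF x] integral_shift[OF y]
    by simp
qed

definition B0 :: real where
  "B0 = max (1 / \<beta>) L_lim"

lemma B0_nonneg: "0 \<le> B0"
  using L_lim_nonneg by (simp add: B0_def le_max_iff_disj)

lemma kernel_pow_oscillation_mult:
  fixes g :: "'a \<Rightarrow> real"
  assumes g[measurable]: "g \<in> borel_measurable S" and g_le: "\<And>y. y \<in> space S \<Longrightarrow> \<bar>g y\<bar> \<le> V y"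
    and x: "x \<in> space S" and y: "y \<in> space S"
  shows "\<bar>(\<integral>z. g z \<partial>Pn (q * m + j) x) - (\<integral>z. g z \<partial>Pn (q * m + j) y)\<bar>
    \<le> \<rho> ^ q * B0 * (2 + \<beta> * V x + \<beta> * V y)"
  using x y
proof (induction q arbitrary: x y)
  case 0
  have abs_integral: "\<bar>\<integral>z. g z \<partial>Pn j v\<bar> \<le> V v + L_lim" if v: "v \<in> space S" for v
  proof -
    have "\<bar>\<integral>z. g z \<partial>Pn j v\<bar> \<le> (\<integral>z. \<bar>g z\<bar> \<partial>Pn j v)"
      by (rule integral_abs_bound)
    also have "\<dots> \<le> (\<integral>z. V z \<partial>Pn j v)"
      using g_le integrable_V_kernel_pow[OF v] integrable_kernel_pow[OF v g, where C=1]
      by (intro integral_mono) (auto simp: space_kernel_pow[OF v])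
    finally show ?thesis using integral_V_kernel_pow_le[OF v, of j] by linarith
  qed
  have "1 \<le> B0 * \<beta>"
    using \<beta>_pos by (simp add: B0_def max_def field_simps split: if_split_asm)
  then have "V x \<le> B0 * \<beta> * V x" "V y \<le> B0 * \<beta> * V y"
    using V_nonneg[OF "0.prems"(1)] V_nonneg[OF "0.prems"(2)] by (simp_all add: mult_le_cancel_right1)
  moreover have "L_lim \<le> B0"
    by (simp add: B0_def)
  ultimately have "V x + L_lim + (V y + L_lim) \<le> B0 * (2 + \<beta> * V x + \<beta> * V y)"
    by (simp add: algebra_simps)
  then show ?case
    using abs_integral[OF "0.prems"(1)] abs_integral[OF "0.prems"(2)] by simp
next
  case (Suc q)
  define \<psi> where "\<psi> v = (\<integral>z. g z \<partial>Pn (q * m + j) v)" for v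
  have [measurable]: "\<psi> \<in> borel_measurable S"
    unfolding \<psi>_def by measurable
  have integral_Suc: "(\<integral>z. g z \<partial>Pn (Suc q * m + j) v) = (\<integral>z. \<psi> z \<partial>Pn m v)" if "v \<in> space S" for v
    using integral_kernel_pow_add(2)[OF that g, of 1 m "q * m + j"] g_le
    by (simp add: \<psi>_def add.assoc)
  have osc: "\<bar>\<psi> v - \<psi> w\<bar> \<le> \<rho> ^ q * B0 * (2 + \<beta> * V v + \<beta> * V w)"
    if "v \<in> space S" "w \<in> space S" for v w
    using Suc.IH[OF that] by (simp add: \<psi>_def)
  show ?case
    unfolding integral_Suc[OF Suc.prems(1)] integral_Suc[OF Suc.prems(2)]
    using contraction[OF \<open>\<psi> \<in> borel_measurable S\<close> osc Suc.prems] by (simp add: mult.assoc)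
qed

lemma kernel_pow_oscillation:
  fixes g :: "'a \<Rightarrow> real"
  assumes "g \<in> borel_measurable S" and "\<And>y. y \<in> space S \<Longrightarrow> \<bar>g y\<bar> \<le> V y"
    and "x \<in> space S" and "y \<in> space S"
  shows "\<bar>(\<integral>z. g z \<partial>Pn n x) - (\<integral>z. g z \<partial>Pn n y)\<bar> \<le> \<rho> ^ (n div m) * B0 * (2 + \<beta> * V x + \<beta> * V y)"
  using kernel_pow_oscillation_mult[OF assms, of "n div m" "n mod m"] by simp

definition \<rho>1 :: real where
  "\<rho>1 = max \<rho> (1 / 2)"

definition \<theta> :: real where
  "\<theta> = \<rho>1 powr (1 / real m)"

lemma \<rho>1_bounds: "1 / 2 \<le> \<rho>1" "\<rho>1 < 1" "\<rho> \<le> \<rho>1"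
  using \<rho>_bounds by (auto simp: \<rho>1_def)

lemma \<theta>_bounds: "0 < \<theta>" "\<theta> < 1"
proof -
  show "0 < \<theta>" using \<rho>1_bounds by (simp add: \<theta>_def)
  have "\<rho>1 powr (1 / real m) < 1 powr (1 / real m)"
    using \<rho>1_bounds m_pos by (intro powr_less_mono2) auto
  then show "\<theta> < 1" by (simp add: \<theta>_def)
qed

lemma \<theta>_pow_m: "\<theta> ^ m = \<rho>1"
  using \<rho>1_bounds m_pos by (simp add: \<theta>_def powr_realpow[symmetric] powr_powr)

lemma \<rho>_pow_div_le: "\<rho> ^ (n div m) \<le> \<theta> ^ n / \<rho>1"
proof -
  have "\<rho> ^ (n div m) \<le> \<rho>1 ^ (n div m)"
    using \<rho>_bounds \<rho>1_bounds by (intro power_mono) auto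
  also have "\<dots> = \<rho>1 ^ Suc (n div m) / \<rho>1"
    using \<rho>1_bounds by simp
  also have "\<dots> = \<theta> ^ (m * Suc (n div m)) / \<rho>1"
    by (simp only: power_mult \<theta>_pow_m)
  also have "\<dots> \<le> \<theta> ^ n / \<rho>1"
  proof (intro divide_right_mono power_decreasing)
    have "m * (n div m) + n mod m = n"
      by (rule mult_div_mod_eq)
    moreover have "n mod m < m"
      using m_pos by simp
    ultimately show "n \<le> m * Suc (n div m)"
      by (simp only: mult_Suc_right)
  qed (use \<theta>_bounds \<rho>1_bounds in auto)
  finally show ?thesis .
qed

end

context harris_kernel
begin

lemma space_nonempty: "space S \<noteq> {}"
  using prob_space.not_empty[OF prob_space_\<nu>] sets_eq_imp_space_eq[OF sets_\<nu>] by simp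

definition x0 :: 'a where
  "x0 = (SOME x. x \<in> space S)"

lemma x0_space: "x0 \<in> space S"
  using space_nonempty by (simp add: x0_def some_in_eq)

definition D :: real where
  "D = B0 * (2 + \<beta> * V x0 + \<beta> * (V x0 + L_lim))"

definition e :: "nat \<Rightarrow> real" where
  "e n = D * (\<theta> ^ n / \<rho>1)"

lemma D_nonneg: "0 \<le> D"
  using B0_nonneg \<beta>_pos V_nonneg[OF x0_space] L_lim_nonneg by (simp add: D_def)

lemma e_nonneg: "0 \<le> e n"
  using D_nonneg \<theta>_bounds \<rho>1_bounds by (simp add: e_def)

lemma e_tendsto: "e \<longlonglongrightarrow> 0"
proof -
  have "(\<lambda>n. \<theta> ^ n) \<longlonglongrightarrow> 0"
    using \<theta>_bounds by (intro LIMSEQ_power_zero) simp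
  then have "(\<lambda>n. D * (\<theta> ^ n / \<rho>1)) \<longlonglongrightarrow> D * (0 / \<rho>1)"
    by (intro tendsto_mult tendsto_divide tendsto_const) (use \<rho>1_bounds in auto)
  then show ?thesis by (simp add: e_def[abs_def])
qed

lemma kernel_pow_cauchy:
  fixes g :: "'a \<Rightarrow> real"
  assumes g[measurable]: "g \<in> borel_measurable S" and g_le: "\<And>y. y \<in> space S \<Longrightarrow> \<bar>g y\<bar> \<le> V y"
  shows "\<bar>(\<integral>z. g z \<partial>Pn (n + k) x0) - (\<integral>z. g z \<partial>Pn n x0)\<bar> \<le> e n"
proof -
  interpret prob_space "Pn k x0" by (rule prob_space_kernel_pow[OF x0_space])
  define G where "G y = (\<integral>z. g z \<partial>Pn n y)" for y
  define c where "c = \<rho> ^ (n div m) * B0"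
  have c: "0 \<le> c" using \<rho>_bounds B0_nonneg by (simp add: c_def)
  have int_G: "integrable (Pn k x0) G" and integral_G: "(\<integral>z. g z \<partial>Pn (n + k) x0) = (\<integral>y. G y \<partial>Pn k x0)"
    using integral_kernel_pow_add[OF x0_space g, of 1 k n] g_le by (auto simp: G_def[abs_def] add.commute)
  have "(\<integral>y. G y - G x0 \<partial>Pn k x0) = (\<integral>y. G y \<partial>Pn k x0) - G x0"
    using int_G by (simp add: prob_space)
  then have "(\<integral>z. g z \<partial>Pn (n + k) x0) - (\<integral>z. g z \<partial>Pn n x0) = (\<integral>y. G y - G x0 \<partial>Pn k x0)"
    by (simp add: integral_G G_def)
  also have "\<bar>\<dots>\<bar> \<le> (\<integral>y. \<bar>G y - G x0\<bar> \<partial>Pn k x0)"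
    by (rule integral_abs_bound)
  also have "\<dots> \<le> (\<integral>y. c * (2 + \<beta> * V x0) + c * \<beta> * V y \<partial>Pn k x0)"
  proof (rule integral_mono)
    show "integrable (Pn k x0) (\<lambda>y. c * (2 + \<beta> * V x0) + c * \<beta> * V y)"
      using integrable_V_kernel_pow[OF x0_space] by simp
    fix y assume "y \<in> space (Pn k x0)"
    then have "\<bar>G y - G x0\<bar> \<le> c * (2 + \<beta> * V y + \<beta> * V x0)"
      using kernel_pow_oscillation[OF g g_le _ x0_space] by (simp add: G_def c_def space_kernel_pow[OF x0_space])
    then show "\<bar>G y - G x0\<bar> \<le> c * (2 + \<beta> * V x0) + c * \<beta> * V y"
      by (simp add: algebra_simps)
  qed (use int_G in simp)
  also have "\<dots> = c * (2 + \<beta> * V x0) + c * \<beta> * (\<integral>y. V y \<partial>Pn k x0)"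
    using integrable_V_kernel_pow[OF x0_space] by (simp add: prob_space)
  also have "\<dots> \<le> c * (2 + \<beta> * V x0) + c * \<beta> * (V x0 + L_lim)"
    using integral_V_kernel_pow_le[OF x0_space] c \<beta>_pos by (intro add_left_mono mult_left_mono) auto
  also have "\<dots> = \<rho> ^ (n div m) * D"
    by (simp add: c_def D_def algebra_simps)
  also have "\<dots> \<le> e n"
    using mult_right_mono[OF \<rho>_pow_div_le D_nonneg] by (simp add: e_def mult.commute)
  finally show ?thesis .
qed

sublocale limit: setwise_cauchy S "\<lambda>n. Pn n x0" e
proof (rule setwise_cauchy.intro)
  show "prob_space (Pn n x0)" for n
    by (rule prob_space_kernel_pow[OF x0_space])
  show "sets (Pn n x0) = sets S" for n
    by (rule sets_kernel_pow[OF x0_space])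
  show "e \<longlonglongrightarrow> 0"
    by (rule e_tendsto)
  fix n k and A assume A: "A \<in> sets S"
  have "measure (Pn j x0) A = (\<integral>z. indicator A z \<partial>Pn j x0)" for j
    using A prob_space_kernel_pow[OF x0_space] by (simp add: sets_kernel_pow[OF x0_space])
  moreover have "\<bar>indicator A y :: real\<bar> \<le> V y" if "y \<in> space S" for y
    using V_ge_1[OF that] by (auto simp: indicator_def)
  ultimately show "\<bar>measure (Pn (n + k) x0) A - measure (Pn n x0) A\<bar> \<le> e n"
    using kernel_pow_cauchy[of "indicator A"] A by simp
qed

abbreviation \<Gamma> :: "'a measure" where
  "\<Gamma> \<equiv> limit.lim_measure"

lemma space_\<Gamma>: "space \<Gamma> = space S"
  by (rule limit.space_lim_measure)

lemma measurable_\<Gamma>_cong: "g \<in> S \<rightarrow>\<^sub>M N \<Longrightarrow> g \<in> \<Gamma> \<rightarrow>\<^sub>M N"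
  using measurable_cong_sets[OF limit.sets_lim_measure refl] by blast

end

context harris_kernel
begin

lemma integral_\<Gamma>_close:
  fixes h :: "'a \<Rightarrow> real"
  assumes [measurable]: "h \<in> borel_measurable S" and C: "0 < C"
    and h_bounds: "\<And>y. y \<in> space S \<Longrightarrow> 0 \<le> h y \<and> h y \<le> C"
  shows "\<bar>(\<integral>y. h y \<partial>\<Gamma>) - (\<integral>y. h y \<partial>Pn n x0)\<bar> \<le> C * e n"
proof -
  have [measurable]: "(\<lambda>y. h y / C) \<in> borel_measurable \<Gamma>" "(\<lambda>y. h y / C) \<in> borel_measurable (Pn n x0)"
    by (simp_all add: measurable_\<Gamma>_cong measurable_kernel_pow_cong[OF x0_space])
  have h01: "0 \<le> h y / C \<and> h y / C \<le> 1" if "y \<in> space S" for y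
    using h_bounds[OF that] C by simp
  have close: "measure \<Gamma> A \<le> measure (Pn n x0) A + e n" "measure (Pn n x0) A \<le> measure \<Gamma> A + e n"
    if "A \<in> sets S" for A
    using limit.lim_measure_close[OF that, of n] by (simp_all add: abs_le_iff)
  have "(\<integral>y. h y / C \<partial>\<Gamma>) \<le> (\<integral>y. h y / C \<partial>Pn n x0) + e n"
    using h01 by (intro integral_le_of_measure_le limit.prob_space_lim_measure prob_space_kernel_pow x0_space)
      (auto simp: sets_kernel_pow[OF x0_space] limit.sets_lim_measure space_\<Gamma> intro: close)
  moreover have "(\<integral>y. h y / C \<partial>Pn n x0) \<le> (\<integral>y. h y / C \<partial>\<Gamma>) + e n"
    using h01 by (intro integral_le_of_measure_le limit.prob_space_lim_measure prob_space_kernel_pow x0_space)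
      (auto simp: sets_kernel_pow[OF x0_space] limit.sets_lim_measure space_kernel_pow[OF x0_space] intro: close)
  ultimately show ?thesis
    using C by (simp add: abs_le_iff field_simps)
qed

lemma \<Gamma>_invariant: "bind \<Gamma> P = \<Gamma>"
proof (rule measure_eqI)
  have ne: "space \<Gamma> \<noteq> {}"
    using space_\<Gamma> space_nonempty by simp
  have P_\<Gamma>: "P \<in> \<Gamma> \<rightarrow>\<^sub>M subprob_algebra S"
    using measurable_\<Gamma>_cong[OF kernel_subprob_algebra] .
  show sets_bind: "sets (bind \<Gamma> P) = sets \<Gamma>"
    using sets_bind_measurable[OF P_\<Gamma> ne] limit.sets_lim_measure by simp
  fix A assume "A \<in> sets (bind \<Gamma> P)"
  then have A: "A \<in> sets S"
    using sets_bind limit.sets_lim_measure by simp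
  define h where "h y = measure (P y) A" for y
  have h_enn: "emeasure (P y) A = ennreal (h y)" if "y \<in> space S" for y
    unfolding h_def using finite_measure.emeasure_eq_measure[OF prob_space.finite_measure, OF prob_space_kernel[OF that]] .
  have h_meas[measurable]: "h \<in> borel_measurable S"
  proof -
    have "(\<lambda>y. enn2real (emeasure (P y) A)) \<in> borel_measurable S"
      using measurable_emeasure_subprob_algebra[OF A] by measurable
    then show ?thesis by (simp add: h_def[abs_def] measure_def)
  qed
  have h01: "0 \<le> h y \<and> h y \<le> 1" if "y \<in> space S" for y
    unfolding h_def using prob_space.prob_le_1[OF prob_space_kernel[OF that]] by simp
  have nn_integral_h: "(\<integral>\<^sup>+y. emeasure (P y) A \<partial>M) = ennreal (\<integral>y. h y \<partial>M)"
    if "prob_space M" and sets_M: "sets M = sets S" for M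
  proof -
    interpret prob_space M by fact
    have [measurable]: "h \<in> borel_measurable M"
      using h_meas unfolding measurable_cong_sets[OF sets_M refl] .
    have "(\<integral>\<^sup>+y. emeasure (P y) A \<partial>M) = (\<integral>\<^sup>+y. h y \<partial>M)"
      using h_enn sets_eq_imp_space_eq[OF sets_M] by (intro nn_integral_cong) simp
    also have "\<dots> = ennreal (\<integral>y. h y \<partial>M)"
      using h01 sets_eq_imp_space_eq[OF sets_M]
      by (intro nn_integral_eq_integral integrable_const_bound[where B=1]) (auto intro!: AE_I2)
    finally show ?thesis .
  qed
  have "emeasure (bind \<Gamma> P) A = ennreal (\<integral>y. h y \<partial>\<Gamma>)"
    using emeasure_bind[OF ne P_\<Gamma> A] nn_integral_h[OF limit.prob_space_lim_measure limit.sets_lim_measure]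
    by simp
  moreover have "measure (Pn (Suc n) x0) A = (\<integral>y. h y \<partial>Pn n x0)" for n
  proof -
    have ne_n: "space (Pn n x0) \<noteq> {}"
      using space_kernel_pow[OF x0_space] space_nonempty by simp
    have "emeasure (Pn (Suc n) x0) A = ennreal (\<integral>y. h y \<partial>Pn n x0)"
      using emeasure_bind[OF ne_n measurable_kernel_pow_cong[OF x0_space kernel_subprob_algebra] A]
        nn_integral_h[OF prob_space_kernel_pow sets_kernel_pow, OF x0_space x0_space]
      by simp
    moreover have "0 \<le> (\<integral>y. h y \<partial>Pn n x0)"
      using h01 by (intro integral_nonneg_AE AE_I2) (simp add: space_kernel_pow[OF x0_space])
    moreover have "emeasure (Pn (Suc n) x0) A = ennreal (measure (Pn (Suc n) x0) A)"
      using finite_measure.emeasure_eq_measure[OF prob_space.finite_measure, OF prob_space_kernel_pow[OF x0_space]] .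
    ultimately show ?thesis
      by (simp del: kernel_pow.simps)
  qed
  then have close: "\<bar>(\<integral>y. h y \<partial>\<Gamma>) - measure \<Gamma> A\<bar> \<le> e n + e (Suc n)" for n
    using integral_\<Gamma>_close[of h 1 n] h01 limit.lim_measure_close[OF A, of "Suc n"] by (simp add: abs_le_iff)
  have "(\<lambda>n. e n + e (Suc n)) \<longlonglongrightarrow> 0 + 0"
    by (intro tendsto_add e_tendsto LIMSEQ_Suc[OF e_tendsto])
  then have "\<bar>(\<integral>y. h y \<partial>\<Gamma>) - measure \<Gamma> A\<bar> \<le> 0"
    using close by (intro LIMSEQ_le_const) auto
  then show "emeasure (bind \<Gamma> P) A = emeasure \<Gamma> A"
    using \<open>emeasure (bind \<Gamma> P) A = ennreal (\<integral>y. h y \<partial>\<Gamma>)\<close>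
      finite_measure.emeasure_eq_measure[OF prob_space.finite_measure, OF limit.prob_space_lim_measure] by simp
qed

lemma nn_integral_V_\<Gamma>: "(\<integral>\<^sup>+y. V y \<partial>\<Gamma>) \<le> ennreal (V x0 + L_lim)"
proof -
  define F where "F i y = min (V y) (real (Suc i))" for i y
  have [measurable]: "F i \<in> borel_measurable S" for i
    unfolding F_def by measurable
  have F_bounds: "0 \<le> F i y \<and> F i y \<le> real (Suc i)" if "y \<in> space S" for i y
    using V_nonneg[OF that] by (simp add: F_def)
  have integral_F: "(\<integral>y. F i y \<partial>\<Gamma>) \<le> V x0 + L_lim" for i
  proof (rule LIMSEQ_le_const)
    show "(\<lambda>n. V x0 + L_lim + real (Suc i) * e n) \<longlonglongrightarrow> V x0 + L_lim"
      using tendsto_add[OF tendsto_const tendsto_mult[OF tendsto_const e_tendsto], of "V x0 + L_lim" "real (Suc i)"]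
      by simp
    have F_le_V: "(\<integral>y. F i y \<partial>Pn n x0) \<le> (\<integral>y. V y \<partial>Pn n x0)" for n
      using F_bounds integrable_V_kernel_pow[OF x0_space]
      by (intro integral_mono integrable_kernel_pow[OF x0_space, where C=1])
        (auto simp: F_def space_kernel_pow[OF x0_space])
    have "(\<integral>y. F i y \<partial>\<Gamma>) \<le> V x0 + L_lim + real (Suc i) * e n" for n
      using integral_\<Gamma>_close[of "F i" "real (Suc i)" n] F_bounds F_le_V[of n] integral_V_kernel_pow_le[OF x0_space, of n]
      by (simp add: abs_le_iff)
    then show "\<exists>N. \<forall>n\<ge>N. (\<integral>y. F i y \<partial>\<Gamma>) \<le> V x0 + L_lim + real (Suc i) * e n"
      by blast
  qed
  have "(\<integral>\<^sup>+y. F i y \<partial>\<Gamma>) \<le> ennreal (V x0 + L_lim)" for i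
  proof -
    interpret prob_space \<Gamma> by (rule limit.prob_space_lim_measure)
    have "(\<integral>\<^sup>+y. F i y \<partial>\<Gamma>) = ennreal (\<integral>y. F i y \<partial>\<Gamma>)"
      using F_bounds
      by (intro nn_integral_eq_integral integrable_const_bound[where B="real (Suc i)"] AE_I2)
        (auto simp: space_\<Gamma> measurable_\<Gamma>_cong)
    then show ?thesis
      using integral_F[of i] by (simp add: ennreal_leI)
  qed
  moreover have "(\<integral>\<^sup>+y. V y \<partial>\<Gamma>) = (SUP i. (\<integral>\<^sup>+y. F i y \<partial>\<Gamma>))"
  proof -
    have "(SUP i. ennreal (F i y)) = ennreal (V y)" for y
    proof (rule antisym)
      show "(SUP i. ennreal (F i y)) \<le> ennreal (V y)"
        by (intro SUP_least) (simp add: F_def ennreal_leI)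
      have "F (nat \<lceil>V y\<rceil>) y = V y"
        by (simp add: F_def) linarith
      then show "ennreal (V y) \<le> (SUP i. ennreal (F i y))"
        by (metis SUP_upper UNIV_I)
    qed
    moreover have "incseq (\<lambda>i y. ennreal (F i y))"
      by (intro monoI le_funI) (simp add: F_def ennreal_leI)
    ultimately show ?thesis
      using nn_integral_monotone_convergence_SUP[of "\<lambda>i y. ennreal (F i y)" \<Gamma>]
      by (simp add: measurable_\<Gamma>_cong)
  qed
  ultimately show ?thesis
    by (simp add: SUP_least)
qed

lemma integrable_\<Gamma>:
  fixes g :: "'a \<Rightarrow> real"
  assumes [measurable]: "g \<in> borel_measurable S" and g_le: "\<And>y. y \<in> space S \<Longrightarrow> \<bar>g y\<bar> \<le> V y"
  shows "integrable \<Gamma> g"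
proof -
  have "(\<integral>\<^sup>+y. norm (g y) \<partial>\<Gamma>) \<le> (\<integral>\<^sup>+y. V y \<partial>\<Gamma>)"
    using g_le by (intro nn_integral_mono) (simp add: space_\<Gamma> ennreal_leI)
  also have "\<dots> < \<infinity>"
    using nn_integral_V_\<Gamma> by (simp add: order_le_less_trans)
  finally show ?thesis
    by (simp add: integrable_iff_bounded measurable_\<Gamma>_cong)
qed

lemma integral_V_\<Gamma>: "(\<integral>y. V y \<partial>\<Gamma>) \<le> V x0 + L_lim"
proof -
  have "ennreal (\<integral>y. V y \<partial>\<Gamma>) = (\<integral>\<^sup>+y. V y \<partial>\<Gamma>)"
    using integrable_\<Gamma>[of V] V_nonneg
    by (intro nn_integral_eq_integral[symmetric] AE_I2) (auto simp: space_\<Gamma>)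
  also have "\<dots> \<le> ennreal (V x0 + L_lim)"
    by (rule nn_integral_V_\<Gamma>)
  finally show ?thesis
    using V_nonneg[OF x0_space] L_lim_nonneg by (subst (asm) ennreal_le_iff) auto
qed

lemma integral_\<Gamma>_kernel_pow:
  fixes g :: "'a \<Rightarrow> real"
  assumes g[measurable]: "g \<in> borel_measurable S" and g_le: "\<And>y. y \<in> space S \<Longrightarrow> \<bar>g y\<bar> \<le> V y"
  shows "integrable \<Gamma> (\<lambda>y. \<integral>z. g z \<partial>Pn n y)" and "(\<integral>y. g y \<partial>\<Gamma>) = (\<integral>y. (\<integral>z. g z \<partial>Pn n y) \<partial>\<Gamma>)"
proof -
  have invariant: "bind \<Gamma> (Pn n) = \<Gamma>"
    using bind_kernel_pow_invariant[OF limit.sets_lim_measure \<Gamma>_invariant] .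
  have "integrable (Pn n y) g" if "y \<in> space \<Gamma>" for y
    using integrable_kernel_pow[OF _ g, of y 1] g_le that by (simp add: space_\<Gamma>)
  moreover have "integrable (bind \<Gamma> (Pn n)) g"
    using integrable_\<Gamma>[OF g g_le] by (simp add: invariant)
  ultimately show "integrable \<Gamma> (\<lambda>y. \<integral>z. g z \<partial>Pn n y)" and "(\<integral>y. g y \<partial>\<Gamma>) = (\<integral>y. (\<integral>z. g z \<partial>Pn n y) \<partial>\<Gamma>)"
    using integral_bind_of_integrable[OF measurable_\<Gamma>_cong[OF kernel_pow_subprob_algebra[of n]] g]
    by (simp_all add: invariant)
qed

lemma \<Gamma>_ergodic_bound:
  fixes g :: "'a \<Rightarrow> real"
  assumes x: "x \<in> space S" and g[measurable]: "g \<in> borel_measurable S"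
    and g_le: "\<And>y. y \<in> space S \<Longrightarrow> \<bar>g y\<bar> \<le> V y"
  shows "\<bar>(\<integral>y. g y \<partial>Pn n x) - (\<integral>y. g y \<partial>\<Gamma>)\<bar> \<le> B0 * (2 + \<beta> + \<beta> * (V x0 + L_lim)) / \<rho>1 * \<theta> ^ n * V x"
proof -
  interpret prob_space \<Gamma> by (rule limit.prob_space_lim_measure)
  define G where "G y = (\<integral>z. g z \<partial>Pn n y)" for y
  define c where "c = \<rho> ^ (n div m) * B0"
  have c: "0 \<le> c" using \<rho>_bounds B0_nonneg by (simp add: c_def)
  have int_G: "integrable \<Gamma> G" and integral_G: "(\<integral>y. g y \<partial>\<Gamma>) = (\<integral>y. G y \<partial>\<Gamma>)"
    using integral_\<Gamma>_kernel_pow[OF g g_le, of n] by (simp_all add: G_def[abs_def])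
  have "(\<integral>y. G x - G y \<partial>\<Gamma>) = G x - (\<integral>y. G y \<partial>\<Gamma>)"
    using int_G by (simp add: prob_space)
  then have "\<bar>(\<integral>y. g y \<partial>Pn n x) - (\<integral>y. g y \<partial>\<Gamma>)\<bar> = \<bar>\<integral>y. G x - G y \<partial>\<Gamma>\<bar>"
    by (simp add: integral_G G_def)
  also have "\<dots> \<le> (\<integral>y. \<bar>G x - G y\<bar> \<partial>\<Gamma>)"
    by (rule integral_abs_bound)
  also have "\<dots> \<le> (\<integral>y. c * (2 + \<beta> * V x) + c * \<beta> * V y \<partial>\<Gamma>)"
  proof (rule integral_mono)
    show "integrable \<Gamma> (\<lambda>y. c * (2 + \<beta> * V x) + c * \<beta> * V y)"
      using integrable_\<Gamma>[of V] V_nonneg by simp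
    fix y assume "y \<in> space \<Gamma>"
    then have "\<bar>G x - G y\<bar> \<le> c * (2 + \<beta> * V x + \<beta> * V y)"
      using kernel_pow_oscillation[OF g g_le x] by (simp add: G_def c_def space_\<Gamma>)
    then show "\<bar>G x - G y\<bar> \<le> c * (2 + \<beta> * V x) + c * \<beta> * V y"
      by (simp add: algebra_simps)
  qed (use int_G in simp)
  also have "\<dots> = c * (2 + \<beta> * V x) + c * \<beta> * (\<integral>y. V y \<partial>\<Gamma>)"
    using integrable_\<Gamma>[of V] V_nonneg by (simp add: prob_space)
  also have "\<dots> \<le> c * (2 + \<beta> * V x) + c * \<beta> * (V x0 + L_lim)"
    using integral_V_\<Gamma> c \<beta>_pos by (intro add_left_mono mult_left_mono) auto
  also have "\<dots> \<le> c * ((2 + \<beta> + \<beta> * (V x0 + L_lim)) * V x)"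
  proof -
    have "0 \<le> 2 + \<beta> * (V x0 + L_lim)"
      using \<beta>_pos V_nonneg[OF x0_space] L_lim_nonneg by simp
    from mult_left_mono[OF V_ge_1[OF x] this]
    have "2 + \<beta> * (V x0 + L_lim) \<le> (2 + \<beta> * (V x0 + L_lim)) * V x"
      by simp
    then have "2 + \<beta> * V x + \<beta> * (V x0 + L_lim) \<le> (2 + \<beta> + \<beta> * (V x0 + L_lim)) * V x"
      by (simp add: algebra_simps)
    from mult_left_mono[OF this c] show ?thesis
      by (simp add: algebra_simps)
  qed
  also have "\<dots> \<le> \<theta> ^ n / \<rho>1 * B0 * ((2 + \<beta> + \<beta> * (V x0 + L_lim)) * V x)"
    unfolding c_def
    using \<rho>_pow_div_le B0_nonneg \<beta>_pos V_nonneg[OF x] V_nonneg[OF x0_space] L_lim_nonneg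
    by (intro mult_right_mono) auto
  finally show ?thesis
    by (simp add: field_simps)
qed

theorem harris_ergodic:
  "\<exists>\<Gamma>. prob_space \<Gamma> \<and> sets \<Gamma> = sets S \<and> bind \<Gamma> P = \<Gamma> \<and> (\<integral>\<^sup>+y. V y \<partial>\<Gamma>) < \<infinity> \<and>
     (\<exists>M \<theta>. 0 \<le> \<theta> \<and> \<theta> < 1 \<and>
       (\<forall>n x g. x \<in> space S \<longrightarrow> g \<in> borel_measurable S \<longrightarrow> (\<forall>y\<in>space S. \<bar>g y\<bar> \<le> V y) \<longrightarrow>
          integrable (Pn n x) g \<and> integrable \<Gamma> g \<and>
          \<bar>(\<integral>y. g y \<partial>Pn n x) - (\<integral>y. g y \<partial>\<Gamma>)\<bar> \<le> M * \<theta> ^ n * V x))"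
proof (intro exI conjI)
  show "prob_space \<Gamma>" "sets \<Gamma> = sets S" "bind \<Gamma> P = \<Gamma>"
    by (fact limit.prob_space_lim_measure limit.sets_lim_measure \<Gamma>_invariant)+
  show "(\<integral>\<^sup>+y. V y \<partial>\<Gamma>) < \<infinity>"
    using nn_integral_V_\<Gamma> by (simp add: order_le_less_trans)
  show "0 \<le> \<theta>" "\<theta> < 1"
    using \<theta>_bounds by auto
  show "\<forall>n x g. x \<in> space S \<longrightarrow> g \<in> borel_measurable S \<longrightarrow> (\<forall>y\<in>space S. \<bar>g y\<bar> \<le> V y) \<longrightarrow>
          integrable (Pn n x) g \<and> integrable \<Gamma> g \<and>
          \<bar>(\<integral>y. g y \<partial>Pn n x) - (\<integral>y. g y \<partial>\<Gamma>)\<bar> \<le> B0 * (2 + \<beta> + \<beta> * (V x0 + L_lim)) / \<rho>1 * \<theta> ^ n * V x"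
  proof (intro allI impI conjI)
    fix n x g assume x: "x \<in> space S" and g: "g \<in> borel_measurable S" and "\<forall>y\<in>space S. \<bar>g y\<bar> \<le> V y"
    then have g_le: "\<And>y. y \<in> space S \<Longrightarrow> \<bar>g y\<bar> \<le> V y" by blast
    show "integrable (Pn n x) g"
      by (rule integrable_kernel_pow[OF x g, where C=1]) (simp add: g_le)
    show "integrable \<Gamma> g"
      by (rule integrable_\<Gamma>[OF g g_le])
    show "\<bar>(\<integral>y. g y \<partial>Pn n x) - (\<integral>y. g y \<partial>\<Gamma>)\<bar> \<le> B0 * (2 + \<beta> + \<beta> * (V x0 + L_lim)) / \<rho>1 * \<theta> ^ n * V x"
      by (rule \<Gamma>_ergodic_bound[OF x g g_le])
  qed
qed

end

lemma space_stateM: "space (stateM p) = (\<Pi>\<^sub>E i\<in>{..<p}. UNIV)"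
  by (simp add: stateM_def space_PiM)

lemma shift_in_space: "shift_in p x y \<in> space (stateM p)"
  by (simp add: space_stateM shift_in_def)

lemma shift_in_0: "0 < p \<Longrightarrow> shift_in p x z 0 = z"
  by (simp add: shift_in_def)

lemma measurable_shift_in[measurable]:
  assumes F[measurable]: "F \<in> M \<rightarrow>\<^sub>M stateM p" and [measurable]: "G \<in> borel_measurable M"
  shows "(\<lambda>z. shift_in p (F z) (G z)) \<in> M \<rightarrow>\<^sub>M stateM p"
  unfolding shift_in_def stateM_def
proof (rule measurable_restrict)
  fix i assume "i \<in> {..<p}"
  then have "(\<lambda>z. F z (i - 1)) \<in> borel_measurable M" if "i \<noteq> 0"
    using that measurable_compose[OF F[unfolded stateM_def] measurable_component_singleton[of "i - 1"]]
    by auto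
  then show "(\<lambda>z. if i = 0 then G z else F z (i - 1)) \<in> borel_measurable M"
    by (cases "i = 0") simp_all
qed

locale ar_model =
  fixes p :: nat and a b :: "(nat \<Rightarrow> real) \<Rightarrow> real" and f :: "real \<Rightarrow> real"
  assumes a_measurable[measurable]: "a \<in> borel_measurable (stateM p)"
    and b_measurable[measurable]: "b \<in> borel_measurable (stateM p)"
    and f_measurable[measurable]: "f \<in> borel_measurable borel"
    and f_nonneg: "\<And>u. 0 \<le> f u"
    and f_density: "(\<integral>\<^sup>+u. ennreal (f u) \<partial>lborel) = 1"
begin

lemma prob_space_noise: "prob_space (density lborel f)"
proof (rule prob_spaceI)
  have "emeasure (density lborel f) (space lborel) = (\<integral>\<^sup>+u. f u * indicator UNIV u \<partial>lborel)"
    by (subst emeasure_density) auto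
  then show "emeasure (density lborel f) (space (density lborel f)) = 1"
    using f_density by simp
qed

lemma ar_step_prob_algebra: "ar_step p a b f \<in> stateM p \<rightarrow>\<^sub>M prob_algebra (stateM p)"
  unfolding ar_step_def[abs_def]
  using prob_space_noise
  by (intro measurable_distr_prob_space2[where M="density lborel f"]) (auto simp: space_prob_algebra)

sublocale markov_kernel "stateM p" "ar_step p a b f"
  by unfold_locales (rule ar_step_prob_algebra)

lemma ar_nstep_eq_kernel_pow: "ar_nstep p a b f = Pn"
proof (intro ext)
  show "ar_nstep p a b f n x = Pn n x" for n x
    by (induction n) simp_all
qed

lemma nn_integral_ar_step:
  fixes g :: "(nat \<Rightarrow> real) \<Rightarrow> ennreal"
  assumes [measurable]: "g \<in> borel_measurable (stateM p)" and x: "x \<in> space (stateM p)"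
  shows "(\<integral>\<^sup>+y. g y \<partial>ar_step p a b f x) = (\<integral>\<^sup>+u. ennreal (f u) * g (shift_in p x (a x + b x * u)) \<partial>lborel)"
  using x unfolding ar_step_def by (simp add: nn_integral_distr nn_integral_density)

end

locale ar_drift = ar_model +
  fixes c :: "nat \<Rightarrow> real" and r K :: real
  assumes p_pos: "1 \<le> p"
    and c_nonneg: "\<And>i. i < p \<Longrightarrow> 0 \<le> c i"
    and c_sum: "(\<Sum>i<p. c i) < 1"
    and r_pos: "0 < r"
    and moment_drift: "\<And>x. x \<in> space (stateM p) \<Longrightarrow>
      (\<integral>\<^sup>+y. ennreal (\<bar>y 0\<bar> powr r) \<partial>ar_step p a b f x) \<le> ennreal (K + (\<Sum>i<p. c i * \<bar>x i\<bar> powr r))"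
begin

text \<open>Weights with \<open>d 0 = 1\<close> and \<open>d (Suc i) + c i = d i - \<eta>\<close>: after one step the new
  coordinate has weight \<open>d 0\<close> and moment at most \<open>K + \<Sum>i. c i * \<bar>x i\<bar> powr r\<close>, while the old
  coordinate \<open>i\<close> moves to weight \<open>d (Suc i)\<close>; together each weight \<open>d i\<close> shrinks by \<open>\<eta>\<close>.\<close>

definition \<eta> :: real where
  "\<eta> = (1 - (\<Sum>i<p. c i)) / real p"

definition d :: "nat \<Rightarrow> real" where
  "d i = (\<Sum>j\<in>{i..<p}. c j) + real (p - i) * \<eta>"

definition V :: "(nat \<Rightarrow> real) \<Rightarrow> real" where
  "V x = 1 + (\<Sum>i<p. d i * \<bar>x i\<bar> powr r)"

lemma \<eta>_pos: "0 < \<eta>"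
  using c_sum p_pos by (simp add: \<eta>_def)

lemma \<eta>_le_1: "\<eta> \<le> 1"
proof -
  have "0 \<le> (\<Sum>i<p. c i)"
    using c_nonneg by (intro sum_nonneg) auto
  then show ?thesis
    using p_pos by (simp add: \<eta>_def divide_le_eq)
qed

lemma d_0: "d 0 = 1"
  using p_pos by (simp add: d_def \<eta>_def atLeast0LessThan)

lemma d_Suc: "i < p \<Longrightarrow> d (Suc i) + c i = d i - \<eta>"
  by (simp add: d_def sum.atLeast_Suc_lessThan of_nat_diff algebra_simps)

lemma \<eta>_le_d: "i < p \<Longrightarrow> \<eta> \<le> d i"
proof -
  assume i: "i < p"
  have "0 \<le> (\<Sum>j\<in>{i..<p}. c j)"
    using c_nonneg by (intro sum_nonneg) auto
  moreover have "\<eta> \<le> real (p - i) * \<eta>"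
    using i \<eta>_pos by simp
  ultimately show ?thesis
    unfolding d_def by linarith
qed

lemma d_nonneg: "0 \<le> d i"
  using \<eta>_le_d[of i] \<eta>_pos by (cases "i < p") (auto simp: d_def)

lemma d_le_1: "d i \<le> 1"
proof -
  have "(\<Sum>j\<in>{i..<p}. c j) \<le> (\<Sum>j<p. c j)"
    using c_nonneg by (intro sum_mono2) auto
  moreover have "real (p - i) * \<eta> \<le> real p * \<eta>"
    using \<eta>_pos by (intro mult_right_mono) auto
  moreover have "(\<Sum>j<p. c j) + real p * \<eta> = 1"
    using p_pos by (simp add: \<eta>_def)
  ultimately show ?thesis
    by (simp add: d_def)
qed

lemma V_measurable[measurable]: "V \<in> borel_measurable (stateM p)"
  unfolding V_def[abs_def] stateM_def by measurable

lemma V_ge_1: "1 \<le> V x"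
  unfolding V_def using d_nonneg by (simp add: sum_nonneg)

lemma V_shift_in: "V (shift_in p x z) = 1 + (\<Sum>i<p. d (Suc i) * \<bar>x i\<bar> powr r) + \<bar>z\<bar> powr r"
proof -
  obtain q where q: "p = Suc q" using p_pos by (cases p) auto
  have "d p = 0" by (simp add: d_def)
  then have "(\<Sum>i<p. d i * \<bar>shift_in p x z i\<bar> powr r) = d 0 * \<bar>z\<bar> powr r + (\<Sum>i<p. d (Suc i) * \<bar>x i\<bar> powr r)"
    unfolding q by (subst sum.lessThan_Suc_shift) (simp add: shift_in_def q)
  then show ?thesis
    by (simp add: V_def d_0)
qed

lemma V_drift:
  assumes x: "x \<in> space (stateM p)"
  shows "(\<integral>\<^sup>+y. V y \<partial>ar_step p a b f x) \<le> ennreal ((1 - \<eta>) * V x + (\<eta> + max K 0))"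
proof -
  define C where "C = 1 + (\<Sum>i<p. d (Suc i) * \<bar>x i\<bar> powr r)"
  have C: "0 \<le> C"
    unfolding C_def using d_nonneg by (simp add: sum_nonneg)
  interpret prob_space "ar_step p a b f x" by (rule prob_space_kernel[OF x])
  have [measurable]: "(\<lambda>y. \<bar>y 0\<bar> powr r) \<in> borel_measurable (stateM p)"
    using p_pos unfolding stateM_def
    by (intro powr_real_measurable borel_measurable_abs measurable_component_singleton measurable_const) auto
  have "(\<integral>\<^sup>+y. V y \<partial>ar_step p a b f x)
      = (\<integral>\<^sup>+u. ennreal (f u) * V (shift_in p x (a x + b x * u)) \<partial>lborel)"
    by (rule nn_integral_ar_step[OF _ x]) measurable
  also have "\<dots> = (\<integral>\<^sup>+u. ennreal (f u) * ennreal (C + \<bar>shift_in p x (a x + b x * u) 0\<bar> powr r) \<partial>lborel)"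
    using p_pos by (simp only: V_shift_in C_def shift_in_0 less_eq_Suc_le One_nat_def)
  also have "\<dots> = (\<integral>\<^sup>+y. ennreal (C + \<bar>y 0\<bar> powr r) \<partial>ar_step p a b f x)"
    by (rule nn_integral_ar_step[OF _ x, symmetric]) measurable
  also have "\<dots> = (\<integral>\<^sup>+y. ennreal C + ennreal (\<bar>y 0\<bar> powr r) \<partial>ar_step p a b f x)"
    using C by (simp add: ennreal_plus)
  also have "\<dots> = ennreal C + (\<integral>\<^sup>+y. ennreal (\<bar>y 0\<bar> powr r) \<partial>ar_step p a b f x)"
  proof -
    have "(\<lambda>y. ennreal (\<bar>y 0\<bar> powr r)) \<in> borel_measurable (stateM p)"
      by measurable
    then have "(\<lambda>y. ennreal (\<bar>y 0\<bar> powr r)) \<in> borel_measurable (ar_step p a b f x)"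
      unfolding measurable_cong_sets[OF sets_kernel[OF x] refl] .
    then show ?thesis
      by (simp add: nn_integral_add emeasure_space_1)
  qed
  also have "\<dots> \<le> ennreal C + ennreal (max K 0 + (\<Sum>i<p. c i * \<bar>x i\<bar> powr r))"
  proof (intro add_left_mono)
    have "ennreal (K + (\<Sum>i<p. c i * \<bar>x i\<bar> powr r)) \<le> ennreal (max K 0 + (\<Sum>i<p. c i * \<bar>x i\<bar> powr r))"
      by (intro ennreal_leI) simp
    with moment_drift[OF x] show "(\<integral>\<^sup>+y. ennreal (\<bar>y 0\<bar> powr r) \<partial>ar_step p a b f x)
        \<le> ennreal (max K 0 + (\<Sum>i<p. c i * \<bar>x i\<bar> powr r))"
      by (rule order_trans)
  qed
  also have "\<dots> \<le> ennreal ((1 - \<eta>) * V x + (\<eta> + max K 0))"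
  proof -
    have "d (Suc i) + c i \<le> (1 - \<eta>) * d i" if "i < p" for i
    proof -
      have "\<eta> * d i \<le> \<eta>"
        using d_le_1[of i] \<eta>_pos by (simp add: mult_left_le)
      then show ?thesis
        using d_Suc[OF that] by (simp add: algebra_simps)
    qed
    then have "(\<Sum>i<p. (d (Suc i) + c i) * \<bar>x i\<bar> powr r) \<le> (\<Sum>i<p. (1 - \<eta>) * (d i * \<bar>x i\<bar> powr r))"
      by (intro sum_mono) (simp add: mult_right_mono mult.assoc[symmetric])
    also have "\<dots> = (1 - \<eta>) * (\<Sum>i<p. d i * \<bar>x i\<bar> powr r)"
      by (rule sum_distrib_left[symmetric])
    finally have "(\<Sum>i<p. d (Suc i) * \<bar>x i\<bar> powr r) + (\<Sum>i<p. c i * \<bar>x i\<bar> powr r)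
        \<le> (1 - \<eta>) * (\<Sum>i<p. d i * \<bar>x i\<bar> powr r)"
      by (simp add: sum.distrib distrib_right)
    then have "C + (max K 0 + (\<Sum>i<p. c i * \<bar>x i\<bar> powr r)) \<le> (1 - \<eta>) * V x + (\<eta> + max K 0)"
      unfolding C_def V_def by (simp add: algebra_simps)
    moreover have "0 \<le> max K 0 + (\<Sum>i<p. c i * \<bar>x i\<bar> powr r)"
      using c_nonneg by (intro add_nonneg_nonneg sum_nonneg) auto
    ultimately show ?thesis
      using C by (simp add: ennreal_leI flip: ennreal_plus)
  qed
  finally show ?thesis .
qed

sublocale lyapunov_kernel "stateM p" "ar_step p a b f" V "1 - \<eta>" "\<eta> + max K 0"
  using V_ge_1 \<eta>_pos \<eta>_le_1 V_drift by unfold_locales auto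

end

definition uniform_Icc :: "real \<Rightarrow> real measure" where
  "uniform_Icc l = scale_measure (ennreal (1 / (2 * l))) (restrict_space lborel {-l..l})"

lemma space_uniform_Icc: "space (uniform_Icc l) = {-l..l}"
  by (simp add: uniform_Icc_def space_scale_measure space_restrict_space)

lemma sets_uniform_Icc[measurable_cong]: "sets (uniform_Icc l) = sets (restrict_space borel {-l..l})"
  by (simp add: uniform_Icc_def sets_restrict_space)

lemma measurable_uniform_Icc_ident: "(\<lambda>w. w) \<in> uniform_Icc l \<rightarrow>\<^sub>M borel"
  by (simp add: measurable_cong_sets[OF sets_uniform_Icc refl] measurable_restrict_space1)

lemma nn_integral_uniform_Icc:
  assumes [measurable]: "g \<in> borel_measurable borel"
  shows "(\<integral>\<^sup>+w. g w \<partial>uniform_Icc l) = ennreal (1 / (2 * l)) * (\<integral>\<^sup>+w. g w * indicator {-l..l} w \<partial>lborel)"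
proof -
  have "g \<in> borel_measurable (restrict_space lborel {-l..l})"
    by (rule measurable_restrict_space1) simp
  then show ?thesis
    by (simp add: uniform_Icc_def nn_integral_scale_measure nn_integral_restrict_space)
qed

lemma prob_space_uniform_Icc:
  assumes l: "0 < l"
  shows "prob_space (uniform_Icc l)"
proof (rule prob_spaceI)
  have "emeasure lborel {-l..l} = ennreal (2 * l)"
    using l emeasure_lborel_Icc_eq[of "-l" l] by simp
  then show "emeasure (uniform_Icc l) (space (uniform_Icc l)) = 1"
    using l by (simp add: uniform_Icc_def space_scale_measure space_restrict_space emeasure_restrict_space
        ennreal_mult[symmetric])
qed

locale ar_minorization = ar_model +
  assumes f_locally_positive: "\<And>R. \<exists>\<delta>>0. \<forall>u. \<bar>u\<bar> \<le> R \<longrightarrow> \<delta> \<le> f u"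
    and b_locally_bounded: "\<And>R. \<exists>\<delta>>0. \<exists>M. \<forall>x\<in>space (stateM p). pnorm p x \<le> R \<longrightarrow> \<delta> \<le> b x \<and> b x \<le> M"
    and a_linear_growth: "\<exists>C. \<forall>x\<in>space (stateM p). \<bar>a x\<bar> \<le> C * (1 + pnorm p x)"
begin

definition in_box :: "real \<Rightarrow> (nat \<Rightarrow> real) \<Rightarrow> bool" where
  "in_box l x \<longleftrightarrow> (\<forall>i<p. \<bar>x i\<bar> \<le> l)"

lemma pnorm_le_of_in_box:
  assumes "in_box l x"
  shows "pnorm p x \<le> sqrt (real p * l\<^sup>2)"
proof -
  have "(x i)\<^sup>2 \<le> l\<^sup>2" if "i < p" for i
    using assms that unfolding in_box_def by (metis abs_ge_zero order_trans power2_abs power_mono)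
  then have "(\<Sum>i<p. (x i)\<^sup>2) \<le> (\<Sum>i<p. l\<^sup>2)"
    by (intro sum_mono) auto
  then show ?thesis
    unfolding pnorm_def by simp
qed

lemma one_step_minorization:
  assumes l: "0 < l"
  obtains \<alpha> where "0 < \<alpha>"
    and "\<And>y h. y \<in> space (stateM p) \<Longrightarrow> in_box l y \<Longrightarrow> h \<in> borel_measurable (stateM p) \<Longrightarrow>
      ennreal \<alpha> * (\<integral>\<^sup>+w. h (shift_in p y w) \<partial>uniform_Icc l) \<le> (\<integral>\<^sup>+z. h z \<partial>ar_step p a b f y)"
proof -
  define R where "R = sqrt (real p * l\<^sup>2)"
  obtain \<delta>b Mb where \<delta>b: "0 < \<delta>b"
    and b_bounds: "\<And>x. x \<in> space (stateM p) \<Longrightarrow> pnorm p x \<le> R \<Longrightarrow> \<delta>b \<le> b x \<and> b x \<le> Mb"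
    using b_locally_bounded[of R] by blast
  obtain C where C: "\<And>x. x \<in> space (stateM p) \<Longrightarrow> \<bar>a x\<bar> \<le> C * (1 + pnorm p x)"
    using a_linear_growth by blast
  define A where "A = \<bar>C\<bar> * (1 + R)"
  obtain \<delta>f where \<delta>f: "0 < \<delta>f" and f_ge: "\<And>u. \<bar>u\<bar> \<le> (l + A) / \<delta>b \<Longrightarrow> \<delta>f \<le> f u"
    using f_locally_positive[of "(l + A) / \<delta>b"] by blast
  define \<alpha> where "\<alpha> = 2 * l * \<delta>f / max Mb 1"
  have \<alpha>: "0 < \<alpha>" using l \<delta>f by (simp add: \<alpha>_def)
  have "ennreal \<alpha> * (\<integral>\<^sup>+w. h (shift_in p y w) \<partial>uniform_Icc l) \<le> (\<integral>\<^sup>+z. h z \<partial>ar_step p a b f y)"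
    if y: "y \<in> space (stateM p)" and box: "in_box l y" and [measurable]: "h \<in> borel_measurable (stateM p)" for y h
  proof -
    have pnorm_y: "pnorm p y \<le> R" using pnorm_le_of_in_box[OF box] by (simp add: R_def)
    have b_y: "\<delta>b \<le> b y" "b y \<le> Mb" using b_bounds[OF y pnorm_y] by auto
    have "\<bar>a y\<bar> \<le> A"
    proof -
      have "0 \<le> pnorm p y" by (simp add: pnorm_def sum_nonneg)
      then have "C * (1 + pnorm p y) \<le> \<bar>C\<bar> * (1 + pnorm p y)"
        by (intro mult_right_mono) auto
      then have "\<bar>a y\<bar> \<le> \<bar>C\<bar> * (1 + pnorm p y)"
        using C[OF y] by linarith
      also have "\<dots> \<le> A" using pnorm_y by (simp add: A_def mult_left_mono)
      finally show ?thesis .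
    qed
    have c: "\<alpha> / (2 * l) * b y \<le> \<delta>f"
    proof -
      have "\<alpha> / (2 * l) * b y = \<delta>f * (b y / max Mb 1)"
        using l by (simp add: \<alpha>_def)
      also have "\<dots> \<le> \<delta>f * 1"
        using \<delta>f \<delta>b b_y by (intro mult_left_mono) auto
      finally show ?thesis by simp
    qed
    have density_ge: "ennreal (\<alpha> / (2 * l) * b y) * indicator {-l..l} (a y + b y * u) \<le> ennreal (f u)" for u
    proof (cases "a y + b y * u \<in> {-l..l}")
      case True
      then have "\<bar>b y * u\<bar> \<le> l + A"
        using \<open>\<bar>a y\<bar> \<le> A\<close> by auto
      moreover have "\<delta>b * \<bar>u\<bar> \<le> \<bar>b y * u\<bar>"
        using b_y \<delta>b by (simp add: abs_mult mult_right_mono)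
      ultimately have "\<bar>u\<bar> \<le> (l + A) / \<delta>b"
        using \<delta>b by (simp add: le_divide_eq mult.commute)
      then have "\<alpha> / (2 * l) * b y \<le> f u"
        using c f_ge by (meson order_trans)
      then show ?thesis
        using True by (simp add: ennreal_leI)
    qed simp
    have "ennreal \<alpha> * (\<integral>\<^sup>+w. h (shift_in p y w) \<partial>uniform_Icc l)
        = ennreal (\<alpha> / (2 * l)) * (\<integral>\<^sup>+w. h (shift_in p y w) * indicator {-l..l} w \<partial>lborel)"
    proof -
      have "ennreal \<alpha> * ennreal (1 / (2 * l)) = ennreal (\<alpha> / (2 * l))"
        using \<alpha> l by (simp add: ennreal_mult[symmetric])
      then show ?thesis
        using l y by (simp add: nn_integral_uniform_Icc mult.assoc[symmetric])
    qed
    also have "\<dots> = ennreal (\<alpha> / (2 * l)) * (ennreal \<bar>b y\<bar> *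
        (\<integral>\<^sup>+u. h (shift_in p y (a y + b y * u)) * indicator {-l..l} (a y + b y * u) \<partial>lborel))"
      using y \<delta>b b_y by (subst nn_integral_real_affine[where c="b y" and t="a y"]) auto
    also have "\<dots> = (\<integral>\<^sup>+u. ennreal (\<alpha> / (2 * l) * b y) *
        (h (shift_in p y (a y + b y * u)) * indicator {-l..l} (a y + b y * u)) \<partial>lborel)"
    proof -
      have "ennreal (\<alpha> / (2 * l)) * ennreal \<bar>b y\<bar> = ennreal (\<alpha> / (2 * l) * b y)"
        using \<delta>b b_y l \<alpha> by (simp add: ennreal_mult[symmetric])
      moreover have "(\<lambda>u. h (shift_in p y (a y + b y * u)) * indicator {-l..l} (a y + b y * u)) \<in> borel_measurable lborel"
        using y by measurable
      ultimately show ?thesis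
        by (subst nn_integral_cmult) (simp_all add: mult.assoc[symmetric])
    qed
    also have "\<dots> \<le> (\<integral>\<^sup>+u. ennreal (f u) * h (shift_in p y (a y + b y * u)) \<partial>lborel)"
    proof (rule nn_integral_mono)
      fix u
      show "ennreal (\<alpha> / (2 * l) * b y) * (h (shift_in p y (a y + b y * u)) * indicator {-l..l} (a y + b y * u))
          \<le> ennreal (f u) * h (shift_in p y (a y + b y * u))"
        using mult_right_mono[OF density_ge[of u], of "h (shift_in p y (a y + b y * u))"]
        by (simp add: ac_simps)
    qed
    also have "\<dots> = (\<integral>\<^sup>+z. h z \<partial>ar_step p a b f y)"
      using y by (simp add: nn_integral_ar_step)
    finally show ?thesis .
  qed
  with \<alpha> show ?thesis using that by blast
qed

end

definition shift_in_many :: "nat \<Rightarrow> nat \<Rightarrow> (nat \<Rightarrow> real) \<Rightarrow> (nat \<Rightarrow> real) \<Rightarrow> (nat \<Rightarrow> real)" where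
  "shift_in_many p k x z = (\<lambda>i\<in>{..<p}. if i < k then z (k - 1 - i) else x (i - k))"

lemma shift_in_many_0: "x \<in> space (stateM p) \<Longrightarrow> shift_in_many p 0 x z = x"
  by (auto simp: shift_in_many_def space_stateM PiE_def extensional_def fun_eq_iff)

lemma shift_in_many_full: "shift_in_many p p x z = (\<lambda>i\<in>{..<p}. z (p - 1 - i))"
  by (auto simp: shift_in_many_def fun_eq_iff)

lemma shift_in_shift_in_many: "shift_in p (shift_in_many p k x z) w = shift_in_many p (Suc k) x (z(k := w))"
proof (rule ext)
  fix i
  show "shift_in p (shift_in_many p k x z) w i = shift_in_many p (Suc k) x (z(k := w)) i"
  proof (cases "i < p \<and> i \<noteq> 0")
    case True
    then have "i - 1 < p" "(i - 1 < k) = (i < Suc k)" "k - 1 - (i - 1) = k - i" "i - 1 - k = i - Suc k"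
      by auto
    moreover have "k - i \<noteq> k" if "i < Suc k" using True that by auto
    ultimately show ?thesis using True by (simp add: shift_in_def shift_in_many_def)
  qed (auto simp: shift_in_def shift_in_many_def)
qed

lemma measurable_shift_in_many:
  assumes "(\<lambda>w. w) \<in> M \<rightarrow>\<^sub>M borel"
  shows "(\<lambda>z. shift_in_many p k x z) \<in> PiM {..<k} (\<lambda>_. M) \<rightarrow>\<^sub>M stateM p"
  unfolding shift_in_many_def stateM_def
proof (rule measurable_restrict)
  fix i assume i: "i \<in> {..<p}"
  have "(\<lambda>z. z (k - 1 - i)) \<in> borel_measurable (PiM {..<k} (\<lambda>_. M))" if "i < k"
    using that measurable_compose[OF measurable_component_singleton[of "k - 1 - i" "{..<k}" "\<lambda>_. M"] assms]
    by auto
  then show "(\<lambda>z. if i < k then z (k - 1 - i) else x (i - k)) \<in> borel_measurable (PiM {..<k} (\<lambda>_. M))"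
    by (cases "i < k") simp_all
qed

context ar_minorization
begin

lemma in_box_shift_in_many:
  "in_box l x \<Longrightarrow> (\<And>j. j < k \<Longrightarrow> \<bar>z j\<bar> \<le> l) \<Longrightarrow> in_box l (shift_in_many p k x z)"
  unfolding in_box_def shift_in_many_def by auto

lemma multi_step_minorization:
  assumes l: "0 < l" and \<alpha>: "0 < \<alpha>"
    and one_step: "\<And>y h. y \<in> space (stateM p) \<Longrightarrow> in_box l y \<Longrightarrow> h \<in> borel_measurable (stateM p) \<Longrightarrow>
      ennreal \<alpha> * (\<integral>\<^sup>+w. h (shift_in p y w) \<partial>uniform_Icc l) \<le> (\<integral>\<^sup>+z. h z \<partial>ar_step p a b f y)"
    and x: "x \<in> space (stateM p)" and box: "in_box l x"
  shows "h \<in> borel_measurable (stateM p) \<Longrightarrow>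
    ennreal (\<alpha> ^ k) * (\<integral>\<^sup>+z. h (shift_in_many p k x z) \<partial>PiM {..<k} (\<lambda>_. uniform_Icc l)) \<le> (\<integral>\<^sup>+z. h z \<partial>Pn k x)"
proof (induction k arbitrary: h)
  case 0
  have "(\<integral>\<^sup>+z. h (shift_in_many p 0 x z) \<partial>PiM {..<0} (\<lambda>_. uniform_Icc l)) = h x"
    by (simp add: PiM_empty shift_in_many_0[OF x] nn_integral_count_space_finite)
  moreover have "(\<integral>\<^sup>+z. h z \<partial>Pn 0 x) = h x"
    using x 0 by (simp add: nn_integral_return)
  ultimately show ?case by simp
next
  case (Suc k)
  interpret U: prob_space "uniform_Icc l" by (rule prob_space_uniform_Icc[OF l])
  interpret product_prob_space "\<lambda>_. uniform_Icc l" "{..<k}" ..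
  note [measurable] = Suc.prems
  define H where "H y = (if in_box l y then ennreal \<alpha> * (\<integral>\<^sup>+w. h (shift_in p y w) \<partial>uniform_Icc l) else 0)" for y
  have [measurable]: "H \<in> borel_measurable (stateM p)"
  proof -
    have [measurable]: "snd \<in> stateM p \<Otimes>\<^sub>M uniform_Icc l \<rightarrow>\<^sub>M borel"
      by (rule measurable_compose[OF measurable_snd measurable_uniform_Icc_ident])
    have "(\<lambda>(y, w). h (shift_in p y w)) \<in> borel_measurable (stateM p \<Otimes>\<^sub>M uniform_Icc l)"
      unfolding case_prod_beta by measurable
    then have "(\<lambda>y. \<integral>\<^sup>+w. h (shift_in p y w) \<partial>uniform_Icc l) \<in> borel_measurable (stateM p)"
      by (rule U.borel_measurable_nn_integral)
    moreover have "Measurable.pred (stateM p) (in_box l)"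
      unfolding in_box_def[abs_def] stateM_def by measurable
    ultimately show ?thesis
      unfolding H_def[abs_def] by measurable
  qed
  have "ennreal (\<alpha> ^ k) * (\<integral>\<^sup>+z. H (shift_in_many p k x z) \<partial>PiM {..<k} (\<lambda>_. uniform_Icc l))
      \<le> (\<integral>\<^sup>+z. H z \<partial>Pn k x)"
    by (rule Suc.IH) measurable
  also have "\<dots> \<le> (\<integral>\<^sup>+y. (\<integral>\<^sup>+z. h z \<partial>ar_step p a b f y) \<partial>Pn k x)"
  proof (rule nn_integral_mono)
    fix y assume "y \<in> space (Pn k x)"
    then have y: "y \<in> space (stateM p)"
      by (simp add: space_kernel_pow[OF x])
    show "H y \<le> (\<integral>\<^sup>+z. h z \<partial>ar_step p a b f y)"
      using one_step[OF y _ Suc.prems] by (cases "in_box l y") (simp_all add: H_def)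
  qed
  also have "\<dots> = (\<integral>\<^sup>+z. h z \<partial>Pn (Suc k) x)"
    by (rule nn_integral_kernel_pow_Suc[symmetric, OF _ x]) measurable
  finally have IH: "ennreal (\<alpha> ^ k) * (\<integral>\<^sup>+z. H (shift_in_many p k x z) \<partial>PiM {..<k} (\<lambda>_. uniform_Icc l))
      \<le> (\<integral>\<^sup>+z. h z \<partial>Pn (Suc k) x)" .
  have meas_Suc: "(\<lambda>z. h (shift_in_many p (Suc k) x z)) \<in> borel_measurable (PiM {..<Suc k} (\<lambda>_. uniform_Icc l))"
    by (rule measurable_compose[OF measurable_shift_in_many[OF measurable_uniform_Icc_ident] Suc.prems])
  have "(\<integral>\<^sup>+z. ennreal \<alpha> * h (shift_in_many p (Suc k) x z) \<partial>PiM (insert k {..<k}) (\<lambda>_. uniform_Icc l))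
      = (\<integral>\<^sup>+z. (\<integral>\<^sup>+w. ennreal \<alpha> * h (shift_in_many p (Suc k) x (z(k := w))) \<partial>uniform_Icc l)
          \<partial>PiM {..<k} (\<lambda>_. uniform_Icc l))"
  proof (rule product_nn_integral_insert)
    show "(\<lambda>z. ennreal \<alpha> * h (shift_in_many p (Suc k) x z)) \<in> borel_measurable (PiM (insert k {..<k}) (\<lambda>_. uniform_Icc l))"
      using meas_Suc by (simp add: lessThan_Suc[symmetric])
  qed auto
  also have "\<dots> = (\<integral>\<^sup>+z. H (shift_in_many p k x z) \<partial>PiM {..<k} (\<lambda>_. uniform_Icc l))"
  proof (rule nn_integral_cong)
    fix z assume z: "z \<in> space (PiM {..<k} (\<lambda>_. uniform_Icc l))"
    then have "\<bar>z j\<bar> \<le> l" if "j < k" for j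
      using that by (auto simp: space_PiM space_uniform_Icc PiE_def Pi_def)
    then have "in_box l (shift_in_many p k x z)"
      using box by (rule in_box_shift_in_many[rotated])
    moreover have "shift_in_many p k x z \<in> space (stateM p)"
      using measurable_space[OF measurable_shift_in_many[OF measurable_uniform_Icc_ident] z] .
    moreover have "(\<lambda>w. h (shift_in p (shift_in_many p k x z) w)) \<in> borel_measurable (uniform_Icc l)"
    proof -
      have [measurable]: "(\<lambda>w. w) \<in> uniform_Icc l \<rightarrow>\<^sub>M borel"
        by (rule measurable_uniform_Icc_ident)
      show ?thesis
        using \<open>shift_in_many p k x z \<in> space (stateM p)\<close> by measurable
    qed
    ultimately show "(\<integral>\<^sup>+w. ennreal \<alpha> * h (shift_in_many p (Suc k) x (z(k := w))) \<partial>uniform_Icc l)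
        = H (shift_in_many p k x z)"
      by (simp only: H_def shift_in_shift_in_many[symmetric] nn_integral_cmult if_True)
  qed
  finally have step: "(\<integral>\<^sup>+z. ennreal \<alpha> * h (shift_in_many p (Suc k) x z) \<partial>PiM {..<Suc k} (\<lambda>_. uniform_Icc l))
      = (\<integral>\<^sup>+z. H (shift_in_many p k x z) \<partial>PiM {..<k} (\<lambda>_. uniform_Icc l))"
    by (simp add: lessThan_Suc)
  have "ennreal (\<alpha> ^ Suc k) * (\<integral>\<^sup>+z. h (shift_in_many p (Suc k) x z) \<partial>PiM {..<Suc k} (\<lambda>_. uniform_Icc l))
      = ennreal (\<alpha> ^ k) * (\<integral>\<^sup>+z. ennreal \<alpha> * h (shift_in_many p (Suc k) x z) \<partial>PiM {..<Suc k} (\<lambda>_. uniform_Icc l))"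
  proof -
    have "ennreal (\<alpha> ^ Suc k) = ennreal (\<alpha> ^ k) * ennreal \<alpha>"
      using \<alpha> by (simp add: ennreal_mult[symmetric] power_Suc2)
    then show ?thesis
      by (simp add: nn_integral_cmult[OF meas_Suc] mult.assoc)
  qed
  also have "\<dots> \<le> (\<integral>\<^sup>+z. h z \<partial>Pn (Suc k) x)"
    using IH by (simp only: step)
  finally show ?case .
qed

end

context ar_minorization
begin

lemma box_minorization:
  assumes l: "0 < l"
  obtains \<alpha> \<nu> where "0 < \<alpha>" "prob_space \<nu>" "sets \<nu> = sets (stateM p)"
    "\<And>x g. x \<in> space (stateM p) \<Longrightarrow> in_box l x \<Longrightarrow> g \<in> borel_measurable (stateM p) \<Longrightarrow>
      ennreal \<alpha> * (\<integral>\<^sup>+y. g y \<partial>\<nu>) \<le> (\<integral>\<^sup>+y. g y \<partial>Pn p x)"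
proof -
  obtain \<alpha> where \<alpha>: "0 < \<alpha>" and one_step:
    "\<And>y h. y \<in> space (stateM p) \<Longrightarrow> in_box l y \<Longrightarrow> h \<in> borel_measurable (stateM p) \<Longrightarrow>
      ennreal \<alpha> * (\<integral>\<^sup>+w. h (shift_in p y w) \<partial>uniform_Icc l) \<le> (\<integral>\<^sup>+z. h z \<partial>ar_step p a b f y)"
    using one_step_minorization[OF l] by blast
  define Z where "Z = PiM {..<p} (\<lambda>_. uniform_Icc l)"
  define rev_state where "rev_state z = (\<lambda>i\<in>{..<p}. z (p - 1 - i))" for z :: "nat \<Rightarrow> real"
  have rev_state[measurable]: "rev_state \<in> Z \<rightarrow>\<^sub>M stateM p"
    using measurable_shift_in_many[OF measurable_uniform_Icc_ident, of p p undefined l]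
    by (simp add: Z_def rev_state_def[abs_def] shift_in_many_full)
  have "prob_space Z"
    unfolding Z_def by (intro prob_space_PiM prob_space_uniform_Icc[OF l])
  then have "prob_space (distr Z (stateM p) rev_state)"
    by (rule prob_space.prob_space_distr) (rule rev_state)
  moreover have "ennreal (\<alpha> ^ p) * (\<integral>\<^sup>+y. g y \<partial>distr Z (stateM p) rev_state) \<le> (\<integral>\<^sup>+y. g y \<partial>Pn p x)"
    if x: "x \<in> space (stateM p)" and box: "in_box l x" and g: "g \<in> borel_measurable (stateM p)" for x g
  proof -
    have "(\<integral>\<^sup>+y. g y \<partial>distr Z (stateM p) rev_state) = (\<integral>\<^sup>+z. g (rev_state z) \<partial>Z)"
      using g by (intro nn_integral_distr[OF rev_state]) simp
    also have "\<dots> = (\<integral>\<^sup>+z. g (shift_in_many p p x z) \<partial>Z)"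
      by (simp only: rev_state_def shift_in_many_full)
    finally show ?thesis
      using multi_step_minorization[OF l \<alpha> one_step x box g, of p] by (simp only: Z_def)
  qed
  moreover have "sets (distr Z (stateM p) rev_state) = sets (stateM p)"
    by (rule sets_distr)
  ultimately show ?thesis
    using that[of "\<alpha> ^ p"] \<alpha> by (meson zero_less_power)
qed

end

locale ar_full = ar_drift + ar_minorization
begin

lemma in_box_of_V_le:
  assumes "V x \<le> R"
  shows "in_box ((R / \<eta>) powr (1 / r) + 1) x"
  unfolding in_box_def
proof (intro allI impI)
  fix i assume i: "i < p"
  have "\<eta> * \<bar>x i\<bar> powr r \<le> d i * \<bar>x i\<bar> powr r"
    using \<eta>_le_d[OF i] by (intro mult_right_mono) auto
  also have "\<dots> \<le> (\<Sum>j<p. d j * \<bar>x j\<bar> powr r)"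
    using i d_nonneg by (intro member_le_sum) auto
  also have "\<dots> \<le> R"
    using assms by (simp add: V_def)
  finally have "\<bar>x i\<bar> powr r \<le> R / \<eta>"
    using \<eta>_pos by (simp add: le_divide_eq mult.commute)
  then have "(\<bar>x i\<bar> powr r) powr (1 / r) \<le> (R / \<eta>) powr (1 / r)"
    using r_pos by (intro powr_mono2) auto
  then show "\<bar>x i\<bar> \<le> (R / \<eta>) powr (1 / r) + 1"
    using r_pos by (simp add: powr_powr)
qed

lemma harris_kernelE:
  obtains R \<alpha> \<nu> where "harris_kernel (stateM p) (ar_step p a b f) V (1 - \<eta>) (\<eta> + max K 0) p R \<alpha> \<nu>"
proof -
  define R where "R = 2 * L_lim / (1 - (1 - \<eta>) ^ p) + 1"
  have "(1 - \<eta>) ^ p < 1"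
    using \<eta>_pos \<eta>_le_1 p_pos by (simp add: power_less_one_iff)
  then have "(1 - (1 - \<eta>) ^ p) * R = 2 * L_lim + (1 - (1 - \<eta>) ^ p)"
    by (simp add: R_def distrib_left)
  then have R_large: "2 * L_lim < (1 - (1 - \<eta>) ^ p) * R"
    using \<open>(1 - \<eta>) ^ p < 1\<close> by linarith
  obtain \<alpha> \<nu> where \<alpha>: "0 < \<alpha>" and \<nu>: "prob_space \<nu>" "sets \<nu> = sets (stateM p)"
    and minor: "\<And>x g. x \<in> space (stateM p) \<Longrightarrow> in_box ((R / \<eta>) powr (1 / r) + 1) x \<Longrightarrow>
      g \<in> borel_measurable (stateM p) \<Longrightarrow> ennreal \<alpha> * (\<integral>\<^sup>+y. g y \<partial>\<nu>) \<le> (\<integral>\<^sup>+y. g y \<partial>Pn p x)"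
  proof (rule box_minorization)
    show "0 < (R / \<eta>) powr (1 / r) + 1"
      by (simp add: add_nonneg_pos)
  qed blast
  have "harris_kernel (stateM p) (ar_step p a b f) V (1 - \<eta>) (\<eta> + max K 0) p R \<alpha> \<nu>"
  proof (intro harris_kernel.intro harris_kernel_axioms.intro)
    show "lyapunov_kernel (stateM p) (ar_step p a b f) V (1 - \<eta>) (\<eta> + max K 0)"
      by (rule lyapunov_kernel_axioms)
    show "\<And>x g. x \<in> space (stateM p) \<Longrightarrow> V x \<le> R \<Longrightarrow> g \<in> borel_measurable (stateM p) \<Longrightarrow>
        ennreal \<alpha> * (\<integral>\<^sup>+y. g y \<partial>\<nu>) \<le> (\<integral>\<^sup>+y. g y \<partial>Pn p x)"
      using minor in_box_of_V_le by blast
  qed (use p_pos R_large \<alpha> \<nu> in auto)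
  then show ?thesis by (rule that)
qed

lemma ar_V_uniformly_ergodic: "\<exists>\<Gamma>. V_uniformly_ergodic p a b f V \<Gamma> \<and> (\<integral>\<^sup>+y. V y \<partial>\<Gamma>) < \<infinity>"
proof -
  obtain R \<alpha> \<nu> where "harris_kernel (stateM p) (ar_step p a b f) V (1 - \<eta>) (\<eta> + max K 0) p R \<alpha> \<nu>"
    by (rule harris_kernelE)
  then interpret harris_kernel "stateM p" "ar_step p a b f" V "1 - \<eta>" "\<eta> + max K 0" p R \<alpha> \<nu> .
  show ?thesis
    using harris_ergodic
    unfolding V_uniformly_ergodic_def ar_stationary_def ar_nstep_eq_kernel_pow by blast
qed

lemma moment_finite:
  assumes "sets M = sets (stateM p)" and "(\<integral>\<^sup>+y. V y \<partial>M) < \<infinity>" and i: "i < p"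
  shows "(\<integral>\<^sup>+y. ennreal (\<bar>y i\<bar> powr r) \<partial>M) < \<infinity>"
proof -
  have d_i: "0 < d i" using \<eta>_le_d[OF i] \<eta>_pos by linarith
  have "ennreal (\<bar>y i\<bar> powr r) \<le> ennreal (1 / d i) * ennreal (V y)" for y
  proof -
    have "d i * \<bar>y i\<bar> powr r \<le> (\<Sum>j<p. d j * \<bar>y j\<bar> powr r)"
      using i d_nonneg by (intro member_le_sum) auto
    then have "\<bar>y i\<bar> powr r \<le> 1 / d i * V y"
      using d_i by (simp add: V_def field_simps)
    then show ?thesis
      using d_i V_ge_1[of y] by (simp add: ennreal_mult[symmetric] ennreal_leI)
  qed
  then have "(\<integral>\<^sup>+y. ennreal (\<bar>y i\<bar> powr r) \<partial>M) \<le> (\<integral>\<^sup>+y. ennreal (1 / d i) * ennreal (V y) \<partial>M)"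
    by (intro nn_integral_mono) simp
  also have "\<dots> = ennreal (1 / d i) * (\<integral>\<^sup>+y. V y \<partial>M)"
    using assms(1) by (intro nn_integral_cmult) (simp add: measurable_cong_sets[OF assms(1) refl])
  also have "\<dots> < \<infinity>"
    using assms(2) by (simp add: ennreal_mult_less_top)
  finally show ?thesis .
qed

end

theorem theorem2p1:
  fixes p :: nat and a b :: "(nat \<Rightarrow> real) \<Rightarrow> real" and f :: "real \<Rightarrow> real"
    and c :: "nat \<Rightarrow> real" and r K :: real
  assumes p_pos: "p \<ge> 1"
    and a_meas: "a \<in> borel_measurable (stateM p)"
    and b_meas: "b \<in> borel_measurable (stateM p)"
    and a_pw: "fin_piecewise_continuous p a"
    and b_pw: "fin_piecewise_continuous p b"
    and f_meas: "f \<in> borel_measurable borel"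
    and f_nonneg: "\<And>u. f u \<ge> 0"
    and f_dens: "(\<integral>\<^sup>+ u. ennreal (f u) \<partial>lborel) = 1"
    \<comment> \<open>A.1\<close>
    and f_loc_pos: "\<And>R. \<exists>\<delta>>0. \<forall>u. \<bar>u\<bar> \<le> R \<longrightarrow> \<delta> \<le> f u"
    and b_pos: "\<And>x. x \<in> space (stateM p) \<Longrightarrow> b x > 0"
    and b_loc: "\<And>R. \<exists>\<delta>>0. \<exists>M. \<forall>x\<in>space (stateM p).
                   pnorm p x \<le> R \<longrightarrow> \<delta> \<le> b x \<and> b x \<le> M"
    \<comment> \<open>A.2\<close>
    and f_tail: "\<exists>M. \<forall>u. (1 + \<bar>u\<bar>) * f u \<le> M"
    and e_moment: "\<exists>r0>0. (\<integral>\<^sup>+ u. ennreal (\<bar>u\<bar> powr r0 * f u) \<partial>lborel) < \<infinity>"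
    \<comment> \<open>A.3\<close>
    and lin_growth: "\<exists>C. \<forall>x\<in>space (stateM p).
                   \<bar>a x\<bar> \<le> C * (1 + pnorm p x) \<and> \<bar>b x\<bar> \<le> C * (1 + pnorm p x)"
    \<comment> \<open>moment condition\<close>
    and c_nonneg: "\<And>i. i < p \<Longrightarrow> c i \<ge> 0"
    and c_sum: "(\<Sum>i<p. c i) < 1"
    and r_pos: "r > 0"
    and drift: "\<And>x. x \<in> space (stateM p) \<Longrightarrow>
       (\<integral>\<^sup>+ y. ennreal (\<bar>y 0\<bar> powr r) \<partial>ar_step p a b f x)
         \<le> ennreal (K + (\<Sum>i<p. c i * \<bar>x i\<bar> powr r))"
  shows "\<exists>d :: nat \<Rightarrow> real. (\<forall>i<p. d i > 0) \<and>
           (\<exists>\<Gamma>. V_uniformly_ergodic p a b f (\<lambda>x. 1 + (\<Sum>i<p. d i * \<bar>x i\<bar> powr r)) \<Gamma>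
               \<and> (\<forall>i<p. (\<integral>\<^sup>+ y. ennreal (\<bar>y i\<bar> powr r) \<partial>\<Gamma>) < \<infinity>))"
proof -
  have "\<exists>C. \<forall>x\<in>space (stateM p). \<bar>a x\<bar> \<le> C * (1 + pnorm p x)"
    using lin_growth by blast
  then have "ar_full p a b f c r K"
    by (intro ar_full.intro ar_drift.intro ar_drift_axioms.intro ar_minorization.intro ar_minorization_axioms.intro ar_model.intro)
      (use assms in auto)
  then interpret ar_full p a b f c r K .
  obtain \<Gamma> where "V_uniformly_ergodic p a b f V \<Gamma>" and "(\<integral>\<^sup>+y. V y \<partial>\<Gamma>) < \<infinity>"
    using ar_V_uniformly_ergodic by blast
  moreover have "0 < d i" if "i < p" for i
    using \<eta>_le_d[OF that] \<eta>_pos by linarith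
  ultimately show ?thesis
    using moment_finite unfolding V_def[abs_def] V_uniformly_ergodic_def ar_stationary_def by blast
qed

end
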